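(* Let $G$ be a finite subgroup of $\mathrm{U}(q)$ and let $\boldsymbol{\lambda}$ be an irreducible representation of $G$ of dimension $|\boldsymbol{\lambda}|$. Suppose $G$ is a $\boldsymbol{\lambda}$-twisted unitary $t$-group. Let $n\ge 1$ and let $\mathcal{C}\subseteq(\mathbb{C}^q)^{\otimes n}$ be any subspace that transforms in $\boldsymbol{\lambda}$ under the action $g\mapsto g^{\otimes n}$ of $G$. Then $\mathcal{C}$ is a $|\boldsymbol{\lambda}|$-dimensional quantum code of distance $d\ge t+1$, i.e. for every operator $E$ on $(\mathbb{C}^q)^{\otimes n}$ of weight at most $t$ there exists $c_E\in\mathbb{C}$ with $\langle\psi|E|\phi\rangle=c_E\langle\psi|\phi\rangle$ for all $|\psi\rangle,|\phi\rangle\in\mathcal{C}$. Moreover, its transversal gate group contains $\boldsymbol{\lambda}(G)$: for every $g\in G$, the transversal operator $g^{\otimes n}$ preserves $\mathcal{C}$ and acts on it as the logical gate $\boldsymbol{\lambda}(g)$ (that is, there is a fixed linear isomorphism $T$ from the representation space of $\boldsymbol{\lambda}$ onto $\mathcal{C}$ with $g^{\otimes n}T = T\boldsymbol{\lambda}(g)$ for all $g\in G$).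
   Context: Definition: $G\subseteq \mathrm{U}(q)$ finite is a $\boldsymbol{\lambda}$-twisted unitary $t$-group, where $\boldsymbol{\lambda}$ is an irreducible representation of $G$ with character $\lambda$, if $\frac{1}{|G|}\sum_{g\in G}|\lambda(g)|^2 \,(g\otimes \bar g)^{\otimes t} = \int_{\mathrm{U}(q)} (U\otimes \bar U)^{\otimes t}\,dU$, where $\bar g$ is the entrywise complex conjugate and the integral is with respect to normalized Haar measure. A subspace $\mathcal{C}$ transforms in $\boldsymbol{\lambda}$ if it is invariant under all $g^{\otimes n}$, $g\in G$, and the resulting representation of $G$ on $\mathcal{C}$ is isomorphic to $\boldsymbol{\lambda}$. An operator on $(\mathbb{C}^q)^{\otimes n}$ has weight at most $t$ if it is a linear combination of operators each acting as the identity on all but at most $t$ of the $n$ tensor factors. *)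

theory Defs
  imports "HOL-Probability.Probability"
begin

text \<open>Matrices in U(q) are represented as elements of complex^'q^'q, with the
  dimension q = CARD('q) given by a finite type.\<close>

type_synonym 'q cmat = "complex^'q^'q"

definition cadj :: "complex^'n^'m \<Rightarrow> complex^'m^'n" where
  "cadj A = (\<chi> i j. cnj (A $ j $ i))"

definition unitary_group :: "('q::finite) cmat set" where
  "unitary_group = {U. U ** cadj U = mat 1 \<and> cadj U ** U = mat 1}"

definition finite_unitary_subgroup :: "('q::finite) cmat set \<Rightarrow> bool" where
  "finite_unitary_subgroup G \<longleftrightarrow> finite G \<and> G \<subseteq> unitary_group \<and> mat 1 \<in> G
     \<and> (\<forall>g\<in>G. \<forall>h\<in>G. g ** h \<in> G) \<and> (\<forall>g\<in>G. cadj g \<in> G)"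

text \<open>Complex subspaces (HOL-Analysis' subspace is real).\<close>

definition csubspace_vec :: "(complex^'d) set \<Rightarrow> bool" where
  "csubspace_vec W \<longleftrightarrow> 0 \<in> W \<and> (\<forall>u\<in>W. \<forall>v\<in>W. u + v \<in> W) \<and> (\<forall>c. \<forall>v\<in>W. c *s v \<in> W)"

definition representation :: "('q::finite) cmat set \<Rightarrow> ('q cmat \<Rightarrow> complex^'d^'d) \<Rightarrow> bool" where
  "representation G \<rho> \<longleftrightarrow> (\<forall>g\<in>G. \<forall>h\<in>G. \<rho> (g ** h) = \<rho> g ** \<rho> h) \<and> \<rho> (mat 1) = mat 1"

definition irreducible_rep :: "('q::finite) cmat set \<Rightarrow> ('q cmat \<Rightarrow> complex^'d::finite^'d) \<Rightarrow> bool" where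
  "irreducible_rep G \<rho> \<longleftrightarrow> representation G \<rho> \<and>
     (\<forall>W. csubspace_vec W \<and> (\<forall>g\<in>G. \<forall>w\<in>W. \<rho> g *v w \<in> W) \<longrightarrow> W = {0} \<or> W = UNIV)"

definition character :: "('q cmat \<Rightarrow> complex^'d::finite^'d) \<Rightarrow> 'q cmat \<Rightarrow> complex" where
  "character \<rho> g = trace (\<rho> g)"

definition haar_measure :: "('q::finite) cmat measure \<Rightarrow> bool" where
  "haar_measure \<mu> \<longleftrightarrow> prob_space \<mu> \<and> sets \<mu> = sets borel \<and> emeasure \<mu> unitary_group = 1 \<and>
     (\<forall>V\<in>unitary_group. distr \<mu> borel (\<lambda>U. V ** U) = \<mu> \<and> distr \<mu> borel (\<lambda>U. U ** V) = \<mu>)"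

text \<open>Entry (a,b) of (U \<otimes> conj U)^{\<otimes> t}; row/column indices of U \<otimes> conj U are pairs.\<close>

definition moment_entry :: "nat \<Rightarrow> ('q::finite) cmat \<Rightarrow> ('q \<times> 'q) list \<Rightarrow> ('q \<times> 'q) list \<Rightarrow> complex" where
  "moment_entry t U a b = (\<Prod>k<t. U $ fst (a!k) $ fst (b!k) * cnj (U $ snd (a!k) $ snd (b!k)))"

definition twisted_unitary_t_group ::
  "('q::finite) cmat set \<Rightarrow> ('q cmat \<Rightarrow> complex^'d::finite^'d) \<Rightarrow> nat \<Rightarrow> bool" where
  "twisted_unitary_t_group G \<rho> t \<longleftrightarrow>
     (\<exists>\<mu>. haar_measure \<mu> \<and>
       (\<forall>a b. length a = t \<longrightarrow> length b = t \<longrightarrow>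
          (1 / of_nat (card G)) * (\<Sum>g\<in>G. complex_of_real ((cmod (character \<rho> g))\<^sup>2) * moment_entry t g a b)
          = integral\<^sup>L \<mu> (\<lambda>U. moment_entry t U a b)))"

text \<open>(C^q)^{\<otimes> n}: functions on index tuples (lists of length n), vanishing elsewhere.
  Operators are kernels on index tuples.\<close>

definition tuples :: "nat \<Rightarrow> ('q::finite) list set" where
  "tuples n = {xs. length xs = n}"

definition tensor_space :: "nat \<Rightarrow> (('q::finite) list \<Rightarrow> complex) set" where
  "tensor_space n = {v. \<forall>xs. length xs \<noteq> n \<longrightarrow> v xs = 0}"

definition apply_op :: "nat \<Rightarrow> (('q::finite) list \<Rightarrow> 'q list \<Rightarrow> complex) \<Rightarrow> ('q list \<Rightarrow> complex) \<Rightarrow> ('q list \<Rightarrow> complex)" where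
  "apply_op n E v = (\<lambda>xs. if length xs = n then (\<Sum>ys\<in>tuples n. E xs ys * v ys) else 0)"

definition inner_n :: "nat \<Rightarrow> (('q::finite) list \<Rightarrow> complex) \<Rightarrow> ('q list \<Rightarrow> complex) \<Rightarrow> complex" where
  "inner_n n \<psi> \<phi> = (\<Sum>xs\<in>tuples n. cnj (\<psi> xs) * \<phi> xs)"

definition tensor_pow :: "nat \<Rightarrow> ('q::finite) cmat \<Rightarrow> 'q list \<Rightarrow> 'q list \<Rightarrow> complex" where
  "tensor_pow n g xs ys = (\<Prod>k<n. g $ (xs!k) $ (ys!k))"

definition csubspace_fun :: "('a \<Rightarrow> complex) set \<Rightarrow> bool" where
  "csubspace_fun W \<longleftrightarrow> (\<lambda>_. 0) \<in> W \<and> (\<forall>u\<in>W. \<forall>v\<in>W. (\<lambda>x. u x + v x) \<in> W)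
     \<and> (\<forall>c. \<forall>v\<in>W. (\<lambda>x. c * v x) \<in> W)"

text \<open>An operator acting as the identity on all tensor factors outside S
  (i.e. of the form A_S \<otimes> I), with card S \<le> t.\<close>

definition local_op :: "nat \<Rightarrow> nat \<Rightarrow> (('q::finite) list \<Rightarrow> 'q list \<Rightarrow> complex) \<Rightarrow> bool" where
  "local_op n t E \<longleftrightarrow> (\<exists>S A. S \<subseteq> {..<n} \<and> card S \<le> t \<and>
     (\<forall>xs\<in>tuples n. \<forall>ys\<in>tuples n.
        E xs ys = (if (\<forall>k\<in>{..<n} - S. xs!k = ys!k)
                   then A (map (\<lambda>k. xs!k) (sorted_list_of_set S)) (map (\<lambda>k. ys!k) (sorted_list_of_set S))
                   else 0)))"

definition weight_le :: "nat \<Rightarrow> nat \<Rightarrow> (('q::finite) list \<Rightarrow> 'q list \<Rightarrow> complex) \<Rightarrow> bool" where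
  "weight_le n t E \<longleftrightarrow> (\<exists>m (Es :: nat \<Rightarrow> 'q list \<Rightarrow> 'q list \<Rightarrow> complex). (\<forall>i<m. local_op n t (Es i)) \<and>
     (\<forall>xs\<in>tuples n. \<forall>ys\<in>tuples n. E xs ys = (\<Sum>i<m. Es i xs ys)))"

definition intertwining_iso ::
  "nat \<Rightarrow> ('q::finite) cmat set \<Rightarrow> ('q cmat \<Rightarrow> complex^'d::finite^'d) \<Rightarrow> ('q list \<Rightarrow> complex) set
     \<Rightarrow> (complex^'d \<Rightarrow> ('q list \<Rightarrow> complex)) \<Rightarrow> bool" where
  "intertwining_iso n G \<rho> C T \<longleftrightarrow>
     (\<forall>u v. T (u + v) = (\<lambda>x. T u x + T v x)) \<and> (\<forall>c v. T (c *s v) = (\<lambda>x. c * T v x)) \<and>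
     bij_betw T UNIV C \<and>
     (\<forall>g\<in>G. \<forall>v. apply_op n (tensor_pow n g) (T v) = T (\<rho> g *v v))"

definition transforms_in ::
  "nat \<Rightarrow> ('q::finite) cmat set \<Rightarrow> ('q cmat \<Rightarrow> complex^'d::finite^'d) \<Rightarrow> ('q list \<Rightarrow> complex) set \<Rightarrow> bool" where
  "transforms_in n G \<rho> C \<longleftrightarrow> csubspace_fun C \<and> C \<subseteq> tensor_space n \<and>
     (\<forall>g\<in>G. \<forall>v\<in>C. apply_op n (tensor_pow n g) v \<in> C) \<and>
     (\<exists>T. intertwining_iso n G \<rho> C T)"

end

theory Submission
  imports Defs "Jordan_Normal_Form.Spectral_Radius"
begin

text \<open>
  Let \<open>T\<close> be the intertwiner from the representation space of \<open>\<lambda>\<close> onto \<open>C\<close>, and for an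
  operator \<open>E\<close> consider the sesquilinear form \<open>K(a,b) = \<langle>T a|E|T b\<rangle>\<close>.  For \<open>E\<close> of weight at
  most \<open>t\<close>, each entry of \<open>(g\<^sup>\<otimes>\<^sup>n)\<^sup>\<dagger> E g\<^sup>\<otimes>\<^sup>n\<close> is a linear combination of moments of \<open>g\<close> of
  degree at most \<open>t\<close>.  The twisted design property replaces the \<open>|\<chi>|\<^sup>2\<close>-weighted average of
  these moments over \<open>G\<close> by a Haar integral, which is right-invariant; hence
  \<open>\<Sum>\<^sub>g |\<chi>(g)|\<^sup>2 K(\<lambda>(gh)a, \<lambda>(gh)b)\<close> does not depend on \<open>h \<in> G\<close>.  In unitary coordinates the map
  \<open>Z \<mapsto> \<Sum>\<^sub>g |\<chi>(g)|\<^sup>2 \<lambda>(g)\<^sup>\<dagger> Z \<lambda>(g)\<close> satisfies \<open>|G| \<langle>Z, \<Phi> Z\<rangle> = \<Sum> |S|\<^sup>2\<close> for suitable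
  sums \<open>S\<close> which determine \<open>Z\<close>, so it is injective; applied to \<open>|G| K\<close> minus its
  group average this shows that \<open>K\<close> is \<open>G\<close>-invariant.  The Gram form of \<open>T\<close> is
  \<open>G\<close>-invariant and positive definite, so by Schur's lemma \<open>K\<close> is a multiple of it,
  which is the Knill-Laflamme condition.  The statements about transversal gates are part
  of the hypothesis that \<open>C\<close> transforms in \<open>\<lambda>\<close>.
\<close>

(* Jordan_Normal_Form is imported only for the existence of eigenvalues; its matrix syntax
   would otherwise shadow that of HOL-Analysis. *)
hide_const (open) Matrix.mat
no_notation Matrix.vec_index (infixl "$" 100)

lemma prod_of_bool:
  "finite A \<Longrightarrow> (\<Prod>k\<in>A. (of_bool (P k) :: 'b::comm_semiring_1)) = of_bool (\<forall>k\<in>A. P k)"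
  by (induction A rule: finite_induct) auto

lemma sum_rotate3:
  "(\<Sum>a\<in>A. \<Sum>b\<in>B. \<Sum>c\<in>C. F a b c) = (\<Sum>b\<in>B. \<Sum>c\<in>C. \<Sum>a\<in>A. F a b c)"
  by (subst sum.swap) (intro sum.cong refl sum.swap)

lemma sum_swap_pairs:
  "(\<Sum>a\<in>A. \<Sum>b\<in>B. \<Sum>c\<in>C. \<Sum>d\<in>D. F a b c d) = (\<Sum>c\<in>C. \<Sum>d\<in>D. \<Sum>a\<in>A. \<Sum>b\<in>B. F a b c d)"
proof -
  have "(\<Sum>a\<in>A. \<Sum>b\<in>B. \<Sum>c\<in>C. \<Sum>d\<in>D. F a b c d) = (\<Sum>a\<in>A. \<Sum>c\<in>C. \<Sum>d\<in>D. \<Sum>b\<in>B. F a b c d)"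
    by (intro sum.cong refl sum_rotate3)
  also have "\<dots> = (\<Sum>c\<in>C. \<Sum>d\<in>D. \<Sum>a\<in>A. \<Sum>b\<in>B. F a b c d)"
    by (rule sum_rotate3)
  finally show ?thesis .
qed

lemma sum_product2:
  "(\<Sum>a\<in>A. \<Sum>b\<in>B. f a b) * (\<Sum>c\<in>C. \<Sum>d\<in>D. g c d) =
   (\<Sum>a\<in>A. \<Sum>b\<in>B. \<Sum>c\<in>C. \<Sum>d\<in>D. f a b * (g c d :: 'a::comm_semiring_1))"
  by (simp add: sum_distrib_left sum_distrib_right) (rule sum_swap_pairs[symmetric])

lemma sum_cnj_mult_self_eq_0_iff:
  fixes f :: "'a \<Rightarrow> complex"
  assumes "finite A"
  shows "(\<Sum>x\<in>A. cnj (f x) * f x) = 0 \<longleftrightarrow> (\<forall>x\<in>A. f x = 0)"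
proof -
  have "(\<Sum>x\<in>A. cnj (f x) * f x) = complex_of_real (\<Sum>x\<in>A. (cmod (f x))\<^sup>2)"
    by (simp only: of_real_sum complex_norm_square mult.commute)
  then show ?thesis
    using assms by (simp add: sum_nonneg_eq_0_iff del: of_real_sum)
qed

lemma sum_sum_mult_separable:
  "(\<Sum>p\<in>A. \<Sum>q\<in>B. c * f p * g q) = c * sum f A * (sum g B :: 'a::comm_semiring_1)"
proof -
  have "c * sum f A * sum g B = c * (\<Sum>p\<in>A. \<Sum>q\<in>B. f p * g q)"
    by (simp only: mult.assoc sum_product)
  also have "\<dots> = (\<Sum>p\<in>A. \<Sum>q\<in>B. c * f p * g q)"
    by (simp only: sum_distrib_left mult.assoc)
  finally show ?thesis ..
qed

lemma sum_mult_sum_swap: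
  "(\<Sum>j\<in>J. (\<Sum>k\<in>K. c k j * e k) * \<beta> j) = (\<Sum>k\<in>K. (\<Sum>j\<in>J. \<beta> j * c k j) * (e k :: 'a::comm_semiring_1))"
proof -
  have "(\<Sum>j\<in>J. (\<Sum>k\<in>K. c k j * e k) * \<beta> j) = (\<Sum>j\<in>J. \<Sum>k\<in>K. \<beta> j * c k j * e k)"
    by (simp add: sum_distrib_left sum_distrib_right mult_ac)
  also have "\<dots> = (\<Sum>k\<in>K. \<Sum>j\<in>J. \<beta> j * c k j * e k)"
    by (rule sum.swap)
  finally show ?thesis
    by (simp add: sum_distrib_right)
qed

lemma sum_swap_weighted_double_sum:
  "(\<Sum>g\<in>G. w g * (c * (\<Sum>u\<in>U. \<Sum>v\<in>V. a u v * f g u v))) =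
   c * (\<Sum>u\<in>U. \<Sum>v\<in>V. a u v * (\<Sum>g\<in>G. w g * f g u v :: 'a::comm_semiring_1))"
proof -
  have "(\<Sum>g\<in>G. w g * (c * (\<Sum>u\<in>U. \<Sum>v\<in>V. a u v * f g u v))) =
     (\<Sum>g\<in>G. \<Sum>u\<in>U. \<Sum>v\<in>V. c * a u v * (w g * f g u v))"
    by (simp add: sum_distrib_left mult_ac)
  also have "\<dots> = (\<Sum>u\<in>U. \<Sum>v\<in>V. \<Sum>g\<in>G. c * a u v * (w g * f g u v))"
    by (rule sum_rotate3)
  finally show ?thesis
    by (simp add: sum_distrib_left mult_ac)
qed

lemma in_tuples [simp]: "xs \<in> tuples n \<longleftrightarrow> length xs = n"
  unfolding tuples_def by simp

lemma finite_tuples [simp]: "finite (tuples n :: ('a::finite) list set)"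
  using finite_lists_length_eq[of "UNIV :: 'a set" n] unfolding tuples_def by simp

lemma tuples_0: "tuples 0 = {[]}"
  unfolding tuples_def by auto

lemma sum_tuples_Suc:
  "(\<Sum>xs\<in>tuples (Suc n). g xs) = (\<Sum>x\<in>UNIV. \<Sum>xs\<in>(tuples n :: ('a::finite) list set). g (x # xs))"
proof -
  have "tuples (Suc n) = (\<lambda>(x, xs). x # xs) ` (UNIV \<times> (tuples n :: 'a list set))"
    unfolding tuples_def by (auto simp: image_iff length_Suc_conv)
  moreover have "inj_on (\<lambda>(x, xs). x # xs) (UNIV \<times> (tuples n :: 'a list set))"
    by (auto simp: inj_on_def)
  ultimately show ?thesis
    by (simp add: sum.reindex sum.cartesian_product case_prod_unfold)
qed

lemma sum_tuples_prod:
  fixes f :: "nat \<Rightarrow> 'a::finite \<Rightarrow> 'b::comm_semiring_1"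
  shows "(\<Sum>xs\<in>tuples n. \<Prod>k<n. f k (xs!k)) = (\<Prod>k<n. \<Sum>x\<in>UNIV. f k x)"
proof (induction n arbitrary: f)
  case 0
  then show ?case by (simp add: tuples_0)
next
  case (Suc n)
  have "(\<Sum>xs\<in>tuples (Suc n). \<Prod>k<Suc n. f k (xs!k))
      = (\<Sum>x\<in>UNIV. \<Sum>xs\<in>tuples n. f 0 x * (\<Prod>k<n. f (Suc k) (xs ! k)))"
    by (simp only: sum_tuples_Suc prod.lessThan_Suc_shift nth_Cons_0 nth_Cons_Suc)
  also have "\<dots> = (\<Sum>x\<in>UNIV. f 0 x) * (\<Prod>k<n. \<Sum>x\<in>UNIV. f (Suc k) x)"
    by (simp add: sum_product[symmetric] Suc.IH[of "\<lambda>k. f (Suc k)"])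
  finally show ?case by (simp only: prod.lessThan_Suc_shift)
qed

lemma sum_tuples2_prod:
  fixes f :: "nat \<Rightarrow> 'a::finite \<Rightarrow> 'a \<Rightarrow> 'b::comm_semiring_1"
  shows "(\<Sum>xs\<in>tuples n. \<Sum>ys\<in>tuples n. \<Prod>k<n. f k (xs!k) (ys!k))
       = (\<Prod>k<n. \<Sum>x\<in>UNIV. \<Sum>y\<in>UNIV. f k x y)"
proof (induction n arbitrary: f)
  case 0
  then show ?case by (simp add: tuples_0)
next
  case (Suc n)
  have "(\<Sum>xs\<in>tuples (Suc n). \<Sum>ys\<in>tuples (Suc n). \<Prod>k<Suc n. f k (xs!k) (ys!k))
    = (\<Sum>x\<in>UNIV. \<Sum>xs\<in>tuples n. \<Sum>y\<in>UNIV. \<Sum>ys\<in>tuples n.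
         f 0 x y * (\<Prod>k<n. f (Suc k) (xs!k) (ys!k)))"
    by (simp only: sum_tuples_Suc prod.lessThan_Suc_shift nth_Cons_0 nth_Cons_Suc)
  also have "\<dots> = (\<Sum>x\<in>UNIV. \<Sum>y\<in>UNIV. f 0 x y * (\<Sum>xs\<in>tuples n. \<Sum>ys\<in>tuples n.
         (\<Prod>k<n. f (Suc k) (xs!k) (ys!k))))"
    by (simp add: sum_distrib_left sum.swap[of _ "tuples n" UNIV])
  also have "\<dots> = (\<Sum>x\<in>UNIV. \<Sum>y\<in>UNIV. f 0 x y) * (\<Prod>k<n. \<Sum>x\<in>UNIV. \<Sum>y\<in>UNIV. f (Suc k) x y)"
    using Suc.IH[of "\<lambda>k. f (Suc k)"] by (simp add: sum_distrib_right)
  finally show ?case by (simp only: prod.lessThan_Suc_shift)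
qed

section \<open>Unitary matrices\<close>

lemma cadj_mult: "cadj (A ** B) = cadj B ** cadj (A :: complex^'n^'m)"
  unfolding cadj_def matrix_matrix_mult_def by (simp add: Finite_Cartesian_Product.vec_eq_iff mult.commute)

lemma unitary_groupD:
  "U \<in> unitary_group \<Longrightarrow> U ** cadj U = mat 1"
  "U \<in> unitary_group \<Longrightarrow> cadj U ** U = mat 1"
  unfolding unitary_group_def by simp_all

lemma unitary_group_mult:
  assumes U: "U \<in> unitary_group" and V: "V \<in> unitary_group"
  shows "U ** V \<in> unitary_group"
proof -
  have "(U ** V) ** cadj (U ** V) = U ** (V ** cadj V) ** cadj U"
    by (simp only: cadj_mult matrix_mul_assoc)
  also have "\<dots> = mat 1"
    using U V by (simp add: unitary_groupD)
  finally have 1: "(U ** V) ** cadj (U ** V) = mat 1" .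
  have "cadj (U ** V) ** (U ** V) = cadj V ** (cadj U ** U) ** V"
    by (simp only: cadj_mult matrix_mul_assoc)
  also have "\<dots> = mat 1"
    using U V by (simp add: unitary_groupD)
  finally show ?thesis
    using 1 unfolding unitary_group_def by simp
qed

lemma unitary_columns_orthonormal:
  fixes U :: "('q::finite) cmat"
  assumes "cadj U ** U = mat 1"
  shows "(\<Sum>x\<in>UNIV. cnj (U $ x $ y) * U $ x $ z) = of_bool (y = z)"
proof -
  have "(\<Sum>x\<in>UNIV. cnj (U $ x $ y) * U $ x $ z) = (cadj U ** U) $ y $ z"
    unfolding matrix_matrix_mult_def cadj_def by simp
  then show ?thesis unfolding assms by (simp add: Finite_Cartesian_Product.mat_def)
qed

lemma unitary_entry_bound:
  fixes U :: "('q::finite) cmat"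
  assumes "U \<in> unitary_group"
  shows "cmod (U $ i $ j) \<le> 1"
proof -
  have "complex_of_real (\<Sum>x\<in>UNIV. (cmod (U $ x $ j))\<^sup>2) = (\<Sum>x\<in>UNIV. cnj (U $ x $ j) * U $ x $ j)"
    by (simp only: of_real_sum complex_norm_square mult.commute)
  also have "\<dots> = 1"
    using unitary_columns_orthonormal[OF unitary_groupD(2)[OF assms]] by simp
  finally have "(\<Sum>x\<in>UNIV. (cmod (U $ x $ j))\<^sup>2) = 1"
    by (simp only: of_real_eq_1_iff)
  moreover have "(cmod (U $ i $ j))\<^sup>2 \<le> (\<Sum>x\<in>UNIV. (cmod (U $ x $ j))\<^sup>2)"
    by (rule member_le_sum) auto
  ultimately have "(cmod (U $ i $ j))\<^sup>2 \<le> 1"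
    by simp
  then show ?thesis
    by (simp add: power_le_one_iff abs_le_square_iff)
qed

section \<open>Moments of unitary matrices\<close>

lemma moment_entry_mult:
  fixes g h :: "('q::finite) cmat"
  shows "moment_entry t (g ** h) a b = (\<Sum>cs\<in>tuples t. moment_entry t g a cs * moment_entry t h cs b)"
proof -
  have factor: "(g ** h) $ fst x $ fst y * cnj ((g ** h) $ snd x $ snd y) =
      (\<Sum>c\<in>UNIV. g $ fst x $ fst c * cnj (g $ snd x $ snd c) * (h $ fst c $ fst y * cnj (h $ snd c $ snd y)))"
    for x y :: "'q \<times> 'q"
  proof -
    have "(g ** h) $ fst x $ fst y * cnj ((g ** h) $ snd x $ snd y)
      = (\<Sum>z\<in>UNIV. \<Sum>z'\<in>UNIV. g $ fst x $ z * h $ z $ fst y * cnj (g $ snd x $ z' * h $ z' $ snd y))"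
      unfolding matrix_matrix_mult_def by (simp add: sum_product)
    also have "\<dots> = (\<Sum>c\<in>UNIV \<times> UNIV. g $ fst x $ fst c * cnj (g $ snd x $ snd c) *
        (h $ fst c $ fst y * cnj (h $ snd c $ snd y)))"
      unfolding sum.cartesian_product by (intro sum.cong refl) (auto simp: mult_ac)
    finally show ?thesis by (simp add: UNIV_Times_UNIV)
  qed
  have "moment_entry t (g ** h) a b = (\<Prod>k<t. \<Sum>c\<in>UNIV.
      g $ fst (a!k) $ fst c * cnj (g $ snd (a!k) $ snd c) * (h $ fst c $ fst (b!k) * cnj (h $ snd c $ snd (b!k))))"
    unfolding moment_entry_def factor ..
  also have "\<dots> = (\<Sum>cs\<in>tuples t. \<Prod>k<t. g $ fst (a!k) $ fst (cs!k) * cnj (g $ snd (a!k) $ snd (cs!k)) *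
      (h $ fst (cs!k) $ fst (b!k) * cnj (h $ snd (cs!k) $ snd (b!k))))"
    by (rule sum_tuples_prod[symmetric])
  finally show ?thesis
    unfolding moment_entry_def by (simp add: prod.distrib)
qed

lemma prod_lessThan_add:
  fixes s r :: nat
  shows "(\<Prod>k<s + r. f k) = (\<Prod>k<s. f k) * (\<Prod>k<r. f (s + k) :: 'b::comm_monoid_mult)"
  by (induction r) (auto simp: mult_ac)

lemma moment_entry_append:
  assumes "length a = s" "length b = s"
  shows "moment_entry (s + r) g (a @ a') (b @ b') = moment_entry s g a b * moment_entry r g a' b'"
  unfolding moment_entry_def prod_lessThan_add using assms by (simp add: nth_append)

text \<open>A moment of degree \<open>s \<le> t\<close> is a sum of moments of degree \<open>t\<close>: pad the rows with
  diagonal pairs \<open>(p,p)\<close>, summed over \<open>p\<close>, and the columns with a fixed pair \<open>(q\<^sub>0,q\<^sub>0)\<close>;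
  each padding factor sums to \<open>\<Sum>\<^sub>p |g\<^sub>p\<^sub>q\<^sub>0|\<^sup>2 = 1\<close>.\<close>

lemma moment_entry_pad:
  fixes g :: "('q::finite) cmat"
  assumes unitary: "cadj g ** g = mat 1"
    and "s \<le> t" and a: "length a = s" and b: "length b = s"
  shows "moment_entry s g a b = (\<Sum>ps\<in>tuples (t - s).
     moment_entry t g (a @ map (\<lambda>p. (p, p)) ps) (b @ replicate (t - s) (q0, q0)))"
proof -
  have t: "t = s + (t - s)" using \<open>s \<le> t\<close> by simp
  have "(\<Sum>ps\<in>tuples (t - s). moment_entry (t - s) g (map (\<lambda>p. (p, p)) ps) (replicate (t - s) (q0, q0)))
     = (\<Sum>ps\<in>tuples (t - s). \<Prod>k<t - s. cnj (g $ (ps!k) $ q0) * g $ (ps!k) $ q0)"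
    unfolding moment_entry_def by (intro sum.cong refl prod.cong) (auto simp: mult.commute)
  also have "\<dots> = (\<Prod>k<t - s. \<Sum>p\<in>UNIV. cnj (g $ p $ q0) * g $ p $ q0)"
    by (rule sum_tuples_prod)
  also have "\<dots> = 1"
    by (simp add: unitary_columns_orthonormal[OF unitary])
  finally have padding: "(\<Sum>ps\<in>tuples (t - s).
      moment_entry (t - s) g (map (\<lambda>p. (p, p)) ps) (replicate (t - s) (q0, q0))) = 1" .
  have "(\<Sum>ps\<in>tuples (t - s). moment_entry t g (a @ map (\<lambda>p. (p, p)) ps) (b @ replicate (t - s) (q0, q0)))
    = moment_entry s g a b * (\<Sum>ps\<in>tuples (t - s).
        moment_entry (t - s) g (map (\<lambda>p. (p, p)) ps) (replicate (t - s) (q0, q0)))"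
    by (subst t) (simp add: moment_entry_append[OF a b] sum_distrib_left)
  then show ?thesis
    unfolding padding by simp
qed

lemma moment_entry_bound:
  assumes "U \<in> unitary_group"
  shows "cmod (moment_entry t U a b) \<le> 1"
  unfolding moment_entry_def prod_norm[symmetric]
  using unitary_entry_bound[OF assms]
  by (intro prod_le_1) (auto simp: norm_mult intro: mult_le_one)

lemma continuous_on_moment_entry:
  "continuous_on UNIV (\<lambda>U::('q::finite) cmat. moment_entry t U a b)"
  unfolding moment_entry_def by (intro continuous_intros)

lemma integrable_moment_entry:
  assumes "haar_measure \<mu>"
  shows "integrable \<mu> (\<lambda>U. moment_entry t U a b)"
proof -
  interpret prob_space \<mu>
    using assms unfolding haar_measure_def by simp
  have sets: "sets \<mu> = sets borel"
    using assms unfolding haar_measure_def by simp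
  have "prob unitary_group = 1"
    using assms unfolding haar_measure_def by (simp add: measure_def)
  then have "AE U in \<mu>. U \<in> unitary_group"
    by (rule AE_prob_1)
  then have "AE U in \<mu>. cmod (moment_entry t U a b) \<le> 1"
    by eventually_elim (rule moment_entry_bound)
  moreover have "(\<lambda>U. moment_entry t U a b) \<in> borel_measurable \<mu>"
    using borel_measurable_continuous_onI[OF continuous_on_moment_entry]
      measurable_cong_sets[OF sets refl] by blast
  ultimately show ?thesis
    by (rule integrable_const_bound)
qed

lemma integral_moment_entry_right_mult:
  assumes "haar_measure \<mu>" and "h \<in> unitary_group"
  shows "integral\<^sup>L \<mu> (\<lambda>U. moment_entry t (U ** h) a b) = integral\<^sup>L \<mu> (\<lambda>U. moment_entry t U a b)"
proof -
  have sets: "sets \<mu> = sets borel" and distr: "distr \<mu> borel (\<lambda>U. U ** h) = \<mu>"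
    using assms unfolding haar_measure_def by simp_all
  have "continuous_on UNIV (\<lambda>U. U ** h)"
    unfolding matrix_matrix_mult_def by (intro continuous_intros)
  then have "(\<lambda>U. U ** h) \<in> measurable \<mu> borel"
    using borel_measurable_continuous_onI measurable_cong_sets[OF sets refl] by blast
  then have "integral\<^sup>L (distr \<mu> borel (\<lambda>U. U ** h)) (\<lambda>U. moment_entry t U a b)
      = integral\<^sup>L \<mu> (\<lambda>U. moment_entry t (U ** h) a b)"
    by (rule integral_distr[OF _ borel_measurable_continuous_onI[OF continuous_on_moment_entry]])
  then show ?thesis
    unfolding distr by simp
qed

section \<open>Weighted designs\<close>

locale weighted_design =
  fixes \<mu> :: "('q::finite) cmat measure" and G :: "'q cmat set"
    and w :: "'q cmat \<Rightarrow> complex" and t :: nat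
  assumes haar: "haar_measure \<mu>"
    and average_eq_integral: "\<And>a b. length a = t \<Longrightarrow> length b = t \<Longrightarrow>
      (1 / of_nat (card G)) * (\<Sum>g\<in>G. w g * moment_entry t g a b) = integral\<^sup>L \<mu> (\<lambda>U. moment_entry t U a b)"
    and card_pos: "card G > 0"
    and unitary: "G \<subseteq> unitary_group"
begin

lemma weighted_sum_eq_integral:
  "length a = t \<Longrightarrow> length b = t \<Longrightarrow>
   (\<Sum>g\<in>G. w g * moment_entry t g a b) = of_nat (card G) * integral\<^sup>L \<mu> (\<lambda>U. moment_entry t U a b)"
  using average_eq_integral card_pos by (auto simp: field_simps)

lemma weighted_moment_right_invariant:
  assumes h: "h \<in> unitary_group" and a: "length a = t" and b: "length b = t"
  shows "(\<Sum>g\<in>G. w g * moment_entry t (g ** h) a b) = (\<Sum>g\<in>G. w g * moment_entry t g a b)"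
proof -
  have "(\<Sum>g\<in>G. w g * moment_entry t (g ** h) a b)
      = (\<Sum>cs\<in>tuples t. (\<Sum>g\<in>G. w g * moment_entry t g a cs) * moment_entry t h cs b)"
    by (simp add: moment_entry_mult sum_distrib_left sum_distrib_right mult_ac sum.swap[of _ G])
  also have "\<dots> = of_nat (card G) *
      (\<Sum>cs\<in>tuples t. integral\<^sup>L \<mu> (\<lambda>U. moment_entry t U a cs * moment_entry t h cs b))"
    using a by (simp add: weighted_sum_eq_integral sum_distrib_left mult_ac)
  also have "\<dots> = of_nat (card G) * integral\<^sup>L \<mu> (\<lambda>U. moment_entry t (U ** h) a b)"
    by (simp add: moment_entry_mult integrable_moment_entry[OF haar])
  also have "\<dots> = (\<Sum>g\<in>G. w g * moment_entry t g a b)"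
    by (simp add: integral_moment_entry_right_mult[OF haar h] weighted_sum_eq_integral a b)
  finally show ?thesis .
qed

lemma weighted_moment_right_invariant_le:
  assumes h: "h \<in> unitary_group" and "s \<le> t" and a: "length a = s" and b: "length b = s"
  shows "(\<Sum>g\<in>G. w g * moment_entry s (g ** h) a b) = (\<Sum>g\<in>G. w g * moment_entry s g a b)"
proof -
  let ?a = "\<lambda>ps. a @ map (\<lambda>p. (p, p)) ps" and ?b = "b @ replicate (t - s) (undefined, undefined)"
  have pad: "moment_entry s U a b = (\<Sum>ps\<in>tuples (t - s). moment_entry t U (?a ps) ?b)"
    if "U \<in> unitary_group" for U
    using moment_entry_pad[OF unitary_groupD(2)[OF that] \<open>s \<le> t\<close> a b] .
  have "(\<Sum>g\<in>G. w g * moment_entry s (g ** h) a b)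
     = (\<Sum>ps\<in>tuples (t - s). \<Sum>g\<in>G. w g * moment_entry t (g ** h) (?a ps) ?b)"
    using unitary h by (simp add: pad unitary_group_mult subset_iff sum_distrib_left sum.swap[of _ G])
  also have "\<dots> = (\<Sum>ps\<in>tuples (t - s). \<Sum>g\<in>G. w g * moment_entry t g (?a ps) ?b)"
    using a b \<open>s \<le> t\<close> by (intro sum.cong refl weighted_moment_right_invariant[OF h]) auto
  also have "\<dots> = (\<Sum>g\<in>G. w g * moment_entry s g a b)"
    using unitary by (simp add: pad subset_iff sum_distrib_left sum.swap[of _ G])
  finally show ?thesis .
qed

end

section \<open>Operators conjugated by tensor powers\<close>

definition tensor_conj ::
  "nat \<Rightarrow> ('q::finite) cmat \<Rightarrow> ('q list \<Rightarrow> 'q list \<Rightarrow> complex) \<Rightarrow> 'q list \<Rightarrow> 'q list \<Rightarrow> complex" where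
  "tensor_conj n g E ys zs =
     (\<Sum>xs\<in>tuples n. \<Sum>xs'\<in>tuples n. cnj (tensor_pow n g xs ys) * E xs xs' * tensor_pow n g xs' zs)"

lemma inner_tensor_conj:
  "inner_n n (apply_op n (tensor_pow n g) \<psi>) (apply_op n E (apply_op n (tensor_pow n g) \<phi>))
   = (\<Sum>ys\<in>tuples n. \<Sum>zs\<in>tuples n. cnj (\<psi> ys) * \<phi> zs * tensor_conj n g E ys zs)"
proof -
  let ?T = "tuples n"
  have "inner_n n (apply_op n (tensor_pow n g) \<psi>) (apply_op n E (apply_op n (tensor_pow n g) \<phi>))
    = (\<Sum>xs\<in>?T. cnj (\<Sum>ys\<in>?T. tensor_pow n g xs ys * \<psi> ys) *
          (\<Sum>xs'\<in>?T. E xs xs' * (\<Sum>zs\<in>?T. tensor_pow n g xs' zs * \<phi> zs)))"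
    unfolding inner_n_def apply_op_def by (intro sum.cong refl) auto
  also have "\<dots> = (\<Sum>xs\<in>?T. \<Sum>xs'\<in>?T. \<Sum>zs\<in>?T. \<Sum>ys\<in>?T.
        cnj (\<psi> ys) * \<phi> zs * (cnj (tensor_pow n g xs ys) * E xs xs' * tensor_pow n g xs' zs))"
    by (simp add: sum_distrib_left sum_distrib_right mult_ac)
  also have "\<dots> = (\<Sum>zs\<in>?T. \<Sum>ys\<in>?T. \<Sum>xs\<in>?T. \<Sum>xs'\<in>?T.
        cnj (\<psi> ys) * \<phi> zs * (cnj (tensor_pow n g xs ys) * E xs xs' * tensor_pow n g xs' zs))"
    by (rule sum_swap_pairs)
  also have "\<dots> = (\<Sum>ys\<in>?T. \<Sum>zs\<in>?T. \<Sum>xs\<in>?T. \<Sum>xs'\<in>?T.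
        cnj (\<psi> ys) * \<phi> zs * (cnj (tensor_pow n g xs ys) * E xs xs' * tensor_pow n g xs' zs))"
    by (rule sum.swap)
  finally show ?thesis
    unfolding tensor_conj_def by (simp add: sum_distrib_left)
qed

lemma tensor_conj_sum:
  assumes "\<And>xs xs'. length xs = n \<Longrightarrow> length xs' = n \<Longrightarrow> E xs xs' = (\<Sum>i<m. Es i xs xs')"
  shows "tensor_conj n g E ys zs = (\<Sum>i<m. tensor_conj n g (Es i) ys zs)"
  unfolding tensor_conj_def using assms
  by (simp add: sum_distrib_left sum_distrib_right sum.swap[of _ "{..<m}"] mult_ac)

lemma tensor_conj_eq_moments:
  "tensor_conj s g A ys zs =
     (\<Sum>u\<in>tuples s. \<Sum>v\<in>tuples s. A u v * moment_entry s g (zip v u) (zip zs ys))"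
  if "length ys = s" "length zs = s"
  unfolding tensor_conj_def tensor_pow_def moment_entry_def
  using that by (intro sum.cong refl) (simp add: prod.distrib mult_ac)

lemma tensor_pow_columns_orthonormal:
  fixes g :: "('q::finite) cmat"
  assumes unitary: "cadj g ** g = mat 1" and "length ys = n" "length zs = n"
  shows "(\<Sum>xs\<in>tuples n. cnj (tensor_pow n g xs ys) * tensor_pow n g xs zs) = of_bool (ys = zs)"
proof -
  have "(\<Sum>xs\<in>tuples n. cnj (tensor_pow n g xs ys) * tensor_pow n g xs zs)
      = (\<Sum>xs\<in>tuples n. \<Prod>k<n. cnj (g $ (xs!k) $ (ys!k)) * g $ (xs!k) $ (zs!k))"
    unfolding tensor_pow_def by (simp add: prod.distrib)
  also have "\<dots> = (\<Prod>k<n. \<Sum>x\<in>UNIV. cnj (g $ x $ (ys!k)) * g $ x $ (zs!k))"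
    by (rule sum_tuples_prod)
  also have "\<dots> = of_bool (\<forall>k\<in>{..<n}. ys!k = zs!k)"
    by (simp add: unitary_columns_orthonormal[OF unitary] prod_of_bool)
  finally show ?thesis
    using assms(2,3) by (auto simp: list_eq_iff_nth_eq)
qed

lemma inner_tensor_pow:
  fixes g :: "('q::finite) cmat"
  assumes unitary: "cadj g ** g = mat 1"
  shows "inner_n n (apply_op n (tensor_pow n g) \<psi>) (apply_op n (tensor_pow n g) \<phi>) = inner_n n \<psi> \<phi>"
proof -
  let ?T = "tuples n"
  have "inner_n n (apply_op n (tensor_pow n g) \<psi>) (apply_op n (tensor_pow n g) \<phi>)
    = (\<Sum>xs\<in>?T. cnj (\<Sum>ys\<in>?T. tensor_pow n g xs ys * \<psi> ys) * (\<Sum>zs\<in>?T. tensor_pow n g xs zs * \<phi> zs))"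
    unfolding inner_n_def apply_op_def by (intro sum.cong refl) auto
  also have "\<dots> = (\<Sum>xs\<in>?T. \<Sum>ys\<in>?T. \<Sum>zs\<in>?T.
      cnj (\<psi> ys) * \<phi> zs * (cnj (tensor_pow n g xs ys) * tensor_pow n g xs zs))"
    by (simp add: sum_distrib_left sum_distrib_right mult_ac)
  also have "\<dots> = (\<Sum>ys\<in>?T. \<Sum>zs\<in>?T. \<Sum>xs\<in>?T.
      cnj (\<psi> ys) * \<phi> zs * (cnj (tensor_pow n g xs ys) * tensor_pow n g xs zs))"
    by (rule sum_rotate3)
  also have "\<dots> = (\<Sum>ys\<in>?T. \<Sum>zs\<in>?T. of_bool (ys = zs) * (cnj (\<psi> ys) * \<phi> zs))"
    by (intro sum.cong refl)
      (simp add: sum_distrib_left[symmetric] tensor_pow_columns_orthonormal[OF unitary])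
  also have "\<dots> = inner_n n \<psi> \<phi>"
    unfolding inner_n_def by simp
  finally show ?thesis .
qed

definition restrict_tuple :: "nat set \<Rightarrow> 'a list \<Rightarrow> 'a list" where
  "restrict_tuple S xs = map (\<lambda>k. xs ! k) (sorted_list_of_set S)"

lemma length_restrict_tuple [simp]: "finite S \<Longrightarrow> length (restrict_tuple S xs) = card S"
  unfolding restrict_tuple_def by simp

lemma bij_betw_nth_sorted_list_of_set:
  "finite S \<Longrightarrow> bij_betw ((!) (sorted_list_of_set S)) {..<card S} S"
  using bij_betw_nth[of "sorted_list_of_set S"] by simp

definition position :: "nat set \<Rightarrow> nat \<Rightarrow> nat" where
  "position S k = inv_into {..<card S} ((!) (sorted_list_of_set S)) k"

lemma position:
  assumes "finite S" "k \<in> S"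
  shows "position S k < card S \<and> sorted_list_of_set S ! position S k = k"
proof -
  have bij: "bij_betw ((!) (sorted_list_of_set S)) {..<card S} S"
    using bij_betw_nth_sorted_list_of_set[OF assms(1)] .
  then have "k \<in> (!) (sorted_list_of_set S) ` {..<card S}"
    using assms(2) by (simp add: bij_betw_def)
  then have "position S k \<in> {..<card S}"
    unfolding position_def by (rule inv_into_into)
  then show ?thesis
    using bij_betw_inv_into_right[OF bij assms(2)] unfolding position_def by simp
qed

lemma position_nth:
  assumes "finite S" "j < card S"
  shows "position S (sorted_list_of_set S ! j) = j"
  unfolding position_def
  using bij_betw_inv_into_left[OF bij_betw_nth_sorted_list_of_set[OF assms(1)]] assms(2) by simp

lemma prod_position:
  assumes "finite S"
  shows "(\<Prod>k\<in>S. f (position S k) k) = (\<Prod>j<card S. f j (sorted_list_of_set S ! j))"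
proof -
  have "(\<Prod>k\<in>S. f (position S k) k) =
      (\<Prod>j<card S. f (position S (sorted_list_of_set S ! j)) (sorted_list_of_set S ! j))"
    by (rule prod.reindex_bij_betw[OF bij_betw_nth_sorted_list_of_set[OF assms], symmetric])
  then show ?thesis
    using assms by (simp add: position_nth)
qed

lemma restrict_tuple_eq_iff:
  assumes "finite S" "length u = card S"
  shows "restrict_tuple S xs = u \<longleftrightarrow> (\<forall>k\<in>S. xs ! k = u ! position S k)"
proof -
  have "restrict_tuple S xs = u \<longleftrightarrow> (\<forall>j<card S. xs ! (sorted_list_of_set S ! j) = u ! j)"
    using assms unfolding restrict_tuple_def by (auto simp: list_eq_iff_nth_eq)
  also have "\<dots> \<longleftrightarrow> (\<forall>k\<in>S. xs ! k = u ! position S k)"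
  proof
    assume "\<forall>j<card S. xs ! (sorted_list_of_set S ! j) = u ! j"
    then show "\<forall>k\<in>S. xs ! k = u ! position S k"
      using position[OF assms(1)] by metis
  next
    assume "\<forall>k\<in>S. xs ! k = u ! position S k"
    moreover have "sorted_list_of_set S ! j \<in> S" if "j < card S" for j
      using that assms(1) nth_mem[of j "sorted_list_of_set S"] by simp
    ultimately show "\<forall>j<card S. xs ! (sorted_list_of_set S ! j) = u ! j"
      using position_nth[OF assms(1)] by metis
  qed
  finally show ?thesis .
qed

text \<open>With positions, the kernel of \<open>A\<^sub>S \<otimes> I\<close> becomes a sum of products of one-site factors,
  so that sums over tuples factorize.\<close>

lemma local_kernel_as_product:
  fixes A :: "'a::finite list \<Rightarrow> 'a list \<Rightarrow> 'b::comm_semiring_1"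
  assumes S: "S \<subseteq> {..<n}"
  shows "(if \<forall>k\<in>{..<n} - S. xs!k = xs'!k then A (restrict_tuple S xs) (restrict_tuple S xs') else 0) =
    (\<Sum>u\<in>tuples (card S). \<Sum>v\<in>tuples (card S). A u v *
      (\<Prod>k<n. if k \<in> S then of_bool (xs!k = u ! position S k) * of_bool (xs'!k = v ! position S k)
                else of_bool (xs!k = xs'!k)))"
proof -
  have fin: "finite S" using S finite_subset by blast
  have prod_eq: "(\<Prod>k<n. if k \<in> S then of_bool (xs!k = u ! position S k) * of_bool (xs'!k = v ! position S k)
                    else of_bool (xs!k = xs'!k))
      = of_bool (restrict_tuple S xs = u) * (of_bool (restrict_tuple S xs' = v) *
        (of_bool (\<forall>k\<in>{..<n} - S. xs!k = xs'!k) :: 'b))"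
    if "length u = card S" "length v = card S" for u v
  proof -
    have "{..<n} \<inter> {k. k \<in> S} = S" "{..<n} \<inter> - {k. k \<in> S} = {..<n} - S"
      using S by auto
    then show ?thesis
      using fin that by (simp add: prod.If_cases prod.distrib prod_of_bool restrict_tuple_eq_iff)
  qed
  have "(\<Sum>u\<in>tuples (card S). \<Sum>v\<in>tuples (card S). A u v *
      (\<Prod>k<n. if k \<in> S then of_bool (xs!k = u ! position S k) * of_bool (xs'!k = v ! position S k)
                else of_bool (xs!k = xs'!k)))
    = (\<Sum>u\<in>tuples (card S). \<Sum>v\<in>tuples (card S). of_bool (restrict_tuple S xs = u) *
        (of_bool (restrict_tuple S xs' = v) * (of_bool (\<forall>k\<in>{..<n} - S. xs!k = xs'!k) * A u v)))"
    by (intro sum.cong refl) (simp only: prod_eq in_tuples mult_ac)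
  also have "\<dots> = (\<Sum>u\<in>tuples (card S). of_bool (restrict_tuple S xs = u) * (\<Sum>v\<in>tuples (card S).
        of_bool (restrict_tuple S xs' = v) * (of_bool (\<forall>k\<in>{..<n} - S. xs!k = xs'!k) * A u v)))"
    by (simp only: sum_distrib_left)
  also have "\<dots> = of_bool (\<forall>k\<in>{..<n} - S. xs!k = xs'!k) * A (restrict_tuple S xs) (restrict_tuple S xs')"
    using fin by simp
  finally show ?thesis
    by simp
qed

lemma tensor_conj_product_kernel:
  assumes "\<And>xs xs'. length xs = n \<Longrightarrow> length xs' = n \<Longrightarrow>
    E xs xs' = (\<Sum>u\<in>U. \<Sum>v\<in>V. A u v * (\<Prod>k<n. F u v k (xs!k) (xs'!k)))"
  shows "tensor_conj n g E ys zs = (\<Sum>u\<in>U. \<Sum>v\<in>V. A u v *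
    (\<Prod>k<n. \<Sum>x\<in>UNIV. \<Sum>x'\<in>UNIV. cnj (g $ x $ (ys!k)) * F u v k x x' * g $ x' $ (zs!k)))"
proof -
  have "tensor_conj n g E ys zs = (\<Sum>xs\<in>tuples n. \<Sum>xs'\<in>tuples n. \<Sum>u\<in>U. \<Sum>v\<in>V.
      A u v * (\<Prod>k<n. cnj (g $ (xs!k) $ (ys!k)) * F u v k (xs!k) (xs'!k) * g $ (xs'!k) $ (zs!k)))"
    unfolding tensor_conj_def tensor_pow_def
    by (intro sum.cong refl) (simp add: assms sum_distrib_left sum_distrib_right prod.distrib mult_ac)
  also have "\<dots> = (\<Sum>u\<in>U. \<Sum>v\<in>V. A u v *
      (\<Sum>xs\<in>tuples n. \<Sum>xs'\<in>tuples n.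
        \<Prod>k<n. cnj (g $ (xs!k) $ (ys!k)) * F u v k (xs!k) (xs'!k) * g $ (xs'!k) $ (zs!k)))"
    by (subst sum_swap_pairs) (simp add: sum_distrib_left)
  also have "\<dots> = (\<Sum>u\<in>U. \<Sum>v\<in>V. A u v *
      (\<Prod>k<n. \<Sum>x\<in>UNIV. \<Sum>x'\<in>UNIV. cnj (g $ x $ (ys!k)) * F u v k x x' * g $ x' $ (zs!k)))"
    by (subst sum_tuples2_prod) (rule refl)
  finally show ?thesis .
qed

lemma unitary_one_site_sum:
  fixes g :: "('q::finite) cmat"
  assumes unitary: "cadj g ** g = mat 1"
  shows "(\<Sum>x\<in>UNIV. \<Sum>x'\<in>UNIV. cnj (g $ x $ y) *
      (if P then of_bool (x = u) * of_bool (x' = v) else of_bool (x = x')) * g $ x' $ z)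
    = (if P then cnj (g $ u $ y) * g $ v $ z else of_bool (y = z))"
proof (cases P)
  case True
  have "(\<Sum>x\<in>UNIV. \<Sum>x'\<in>UNIV. cnj (g $ x $ y) *
      (if P then of_bool (x = u) * of_bool (x' = v) else of_bool (x = x')) * g $ x' $ z)
    = (\<Sum>x\<in>UNIV. of_bool (x = u) * (\<Sum>x'\<in>UNIV. of_bool (x' = v) * (cnj (g $ x $ y) * g $ x' $ z)))"
    using True by (intro sum.cong refl) (simp add: sum_distrib_left mult_ac)
  then show ?thesis
    using True by simp
next
  case False
  have "(\<Sum>x\<in>UNIV. \<Sum>x'\<in>UNIV. cnj (g $ x $ y) *
      (if P then of_bool (x = u) * of_bool (x' = v) else of_bool (x = x')) * g $ x' $ z)
    = (\<Sum>x\<in>UNIV. \<Sum>x'\<in>UNIV. of_bool (x = x') * (cnj (g $ x $ y) * g $ x' $ z))"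
    using False by (intro sum.cong refl) (simp add: mult_ac)
  then show ?thesis
    using False by (simp add: unitary_columns_orthonormal[OF unitary])
qed

lemma tensor_conj_local_op:
  fixes g :: "('q::finite) cmat" and A :: "'q list \<Rightarrow> 'q list \<Rightarrow> complex"
  assumes unitary: "cadj g ** g = mat 1" and S: "S \<subseteq> {..<n}"
    and E: "\<And>xs xs'. length xs = n \<Longrightarrow> length xs' = n \<Longrightarrow> E xs xs' =
      (if \<forall>k\<in>{..<n} - S. xs!k = xs'!k then A (restrict_tuple S xs) (restrict_tuple S xs') else 0)"
    and ys: "length ys = n" and zs: "length zs = n"
  shows "tensor_conj n g E ys zs = of_bool (\<forall>k\<in>{..<n} - S. ys!k = zs!k) *
    tensor_conj (card S) g A (restrict_tuple S ys) (restrict_tuple S zs)"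
proof -
  define s where "s = card S"
  have fin: "finite S" using S finite_subset by blast
  define F where "F u v k x x' = (if k \<in> S then of_bool (x = u ! position S k) * of_bool (x' = v ! position S k)
      else (of_bool (x = x') :: complex))" for u v :: "'q list" and k x x'
  have one_site: "(\<Sum>x\<in>UNIV. \<Sum>x'\<in>UNIV. cnj (g $ x $ (ys!k)) * F u v k x x' * g $ x' $ (zs!k))
      = (if k \<in> S then cnj (g $ (u ! position S k) $ (ys!k)) * g $ (v ! position S k) $ (zs!k)
         else of_bool (ys!k = zs!k))"
    for u v k
    unfolding F_def by (rule unitary_one_site_sum[OF unitary])
  have on_S: "(\<Prod>k\<in>S. cnj (g $ (u ! position S k) $ (ys!k)) * g $ (v ! position S k) $ (zs!k))
      = cnj (tensor_pow s g u (restrict_tuple S ys)) * tensor_pow s g v (restrict_tuple S zs)" for u v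
    using prod_position[OF fin, of "\<lambda>j k. cnj (g $ (u ! j) $ (ys!k)) * g $ (v ! j) $ (zs!k)"]
    unfolding tensor_pow_def restrict_tuple_def s_def by (simp add: prod.distrib)
  have E_expand: "E xs xs' = (\<Sum>u\<in>tuples s. \<Sum>v\<in>tuples s. A u v * (\<Prod>k<n. F u v k (xs!k) (xs'!k)))"
    if "length xs = n" "length xs' = n" for xs xs'
    using E[OF that] local_kernel_as_product[OF S, of xs xs' A]
    unfolding F_def s_def by simp
  have "tensor_conj n g E ys zs = (\<Sum>u\<in>tuples s. \<Sum>v\<in>tuples s. A u v *
      (\<Prod>k<n. \<Sum>x\<in>UNIV. \<Sum>x'\<in>UNIV. cnj (g $ x $ (ys!k)) * F u v k x x' * g $ x' $ (zs!k)))"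
    by (rule tensor_conj_product_kernel[where A = A and F = F, OF E_expand])
  also have "\<dots> = (\<Sum>u\<in>tuples s. \<Sum>v\<in>tuples s. A u v *
      (\<Prod>k<n. if k \<in> S then cnj (g $ (u ! position S k) $ (ys!k)) * g $ (v ! position S k) $ (zs!k)
                else of_bool (ys!k = zs!k)))"
    by (simp only: one_site)
  also have "\<dots> = (\<Sum>u\<in>tuples s. \<Sum>v\<in>tuples s. A u v *
      ((\<Prod>k\<in>S. cnj (g $ (u ! position S k) $ (ys!k)) * g $ (v ! position S k) $ (zs!k)) *
       (\<Prod>k\<in>{..<n} - S. of_bool (ys!k = zs!k))))"
  proof -
    have "{..<n} \<inter> {k. k \<in> S} = S" "{..<n} \<inter> - {k. k \<in> S} = {..<n} - S"
      using S by auto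
    then show ?thesis
      by (simp only: prod.If_cases finite_lessThan)
  qed
  also have "\<dots> = (\<Sum>u\<in>tuples s. \<Sum>v\<in>tuples s. of_bool (\<forall>k\<in>{..<n} - S. ys!k = zs!k) *
      (cnj (tensor_pow s g u (restrict_tuple S ys)) * A u v * tensor_pow s g v (restrict_tuple S zs)))"
    by (intro sum.cong refl, subst on_S) (auto simp: prod_of_bool mult_ac)
  finally show ?thesis
    unfolding tensor_conj_def s_def by (simp add: sum_distrib_left)
qed

context weighted_design
begin

lemma tensor_conj_local_op_right_invariant:
  assumes h: "h \<in> unitary_group" and "local_op n t E" and ys: "length ys = n" and zs: "length zs = n"
  shows "(\<Sum>g\<in>G. w g * tensor_conj n (g ** h) E ys zs) = (\<Sum>g\<in>G. w g * tensor_conj n g E ys zs)"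
proof -
  obtain S A where S: "S \<subseteq> {..<n}" "card S \<le> t" and E: "\<forall>xs\<in>tuples n. \<forall>ys\<in>tuples n.
        E xs ys = (if (\<forall>k\<in>{..<n} - S. xs!k = ys!k)
                   then A (map (\<lambda>k. xs!k) (sorted_list_of_set S)) (map (\<lambda>k. ys!k) (sorted_list_of_set S))
                   else 0)"
    using \<open>local_op n t E\<close> unfolding local_op_def by blast
  have fin: "finite S" using S finite_subset by blast
  define y z where "y = restrict_tuple S ys" and "z = restrict_tuple S zs"
  define \<delta> :: complex where "\<delta> = of_bool (\<forall>k\<in>{..<n} - S. ys!k = zs!k)"
  have E': "E xs xs' =
      (if \<forall>k\<in>{..<n} - S. xs!k = xs'!k then A (restrict_tuple S xs) (restrict_tuple S xs') else 0)"
    if "length xs = n" "length xs' = n" for xs xs'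
    using E that unfolding restrict_tuple_def by simp
  have conj_eq: "tensor_conj n U E ys zs =
      \<delta> * (\<Sum>u\<in>tuples (card S). \<Sum>v\<in>tuples (card S). A u v * moment_entry (card S) U (zip v u) (zip z y))"
    if "U \<in> unitary_group" for U
  proof -
    have "tensor_conj n U E ys zs = \<delta> * tensor_conj (card S) U A y z"
      unfolding \<delta>_def y_def z_def by (rule tensor_conj_local_op[OF unitary_groupD(2)[OF that] S(1) E' ys zs])
    then show ?thesis
      using fin by (simp add: tensor_conj_eq_moments y_def z_def)
  qed
  have "(\<Sum>g\<in>G. w g * tensor_conj n (g ** h) E ys zs) = \<delta> * (\<Sum>u\<in>tuples (card S). \<Sum>v\<in>tuples (card S).
      A u v * (\<Sum>g\<in>G. w g * moment_entry (card S) (g ** h) (zip v u) (zip z y)))"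
    using unitary h by (simp add: conj_eq unitary_group_mult subset_iff sum_swap_weighted_double_sum)
  also have "\<dots> = \<delta> * (\<Sum>u\<in>tuples (card S). \<Sum>v\<in>tuples (card S).
      A u v * (\<Sum>g\<in>G. w g * moment_entry (card S) g (zip v u) (zip z y)))"
  proof -
    have "(\<Sum>g\<in>G. w g * moment_entry (card S) (g ** h) (zip v u) (zip z y))
        = (\<Sum>g\<in>G. w g * moment_entry (card S) g (zip v u) (zip z y))"
      if "u \<in> tuples (card S)" "v \<in> tuples (card S)" for u v
      using that fin S(2) unfolding y_def z_def by (intro weighted_moment_right_invariant_le[OF h]) auto
    then show ?thesis
      by (intro arg_cong[where f="(*) \<delta>"] sum.cong refl) simp
  qed
  also have "\<dots> = (\<Sum>g\<in>G. w g * tensor_conj n g E ys zs)"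
    using unitary by (simp add: conj_eq subset_iff sum_swap_weighted_double_sum)
  finally show ?thesis .
qed

lemma tensor_conj_right_invariant:
  assumes h: "h \<in> unitary_group" and "weight_le n t E" and ys: "length ys = n" and zs: "length zs = n"
  shows "(\<Sum>g\<in>G. w g * tensor_conj n (g ** h) E ys zs) = (\<Sum>g\<in>G. w g * tensor_conj n g E ys zs)"
proof -
  obtain m :: nat and Es :: "nat \<Rightarrow> 'q list \<Rightarrow> 'q list \<Rightarrow> complex" where local: "\<forall>i<m. local_op n t (Es i)"
    and E: "\<forall>xs\<in>tuples n. \<forall>ys\<in>tuples n. E xs ys = (\<Sum>i<m. Es i xs ys)"
    using \<open>weight_le n t E\<close> unfolding weight_le_def by blast
  have split: "tensor_conj n U E ys zs = (\<Sum>i<m. tensor_conj n U (Es i) ys zs)" for U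
    using E by (intro tensor_conj_sum) auto
  have "(\<Sum>g\<in>G. w g * tensor_conj n (g ** h) E ys zs)
      = (\<Sum>i<m. \<Sum>g\<in>G. w g * tensor_conj n (g ** h) (Es i) ys zs)"
    by (simp add: split sum_distrib_left) (rule sum.swap)
  also have "\<dots> = (\<Sum>i<m. \<Sum>g\<in>G. w g * tensor_conj n g (Es i) ys zs)"
    using local by (simp add: tensor_conj_local_op_right_invariant[OF h _ ys zs])
  also have "\<dots> = (\<Sum>g\<in>G. w g * tensor_conj n g E ys zs)"
    by (simp add: split sum_distrib_left) (rule sum.swap[symmetric])
  finally show ?thesis .
qed

lemma weighted_twirl_right_invariant:
  assumes "h \<in> unitary_group" and "weight_le n t E"
  shows "(\<Sum>g\<in>G. w g * inner_n n (apply_op n (tensor_pow n (g ** h)) \<psi>)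
                                  (apply_op n E (apply_op n (tensor_pow n (g ** h)) \<phi>)))
       = (\<Sum>g\<in>G. w g * inner_n n (apply_op n (tensor_pow n g) \<psi>)
                                  (apply_op n E (apply_op n (tensor_pow n g) \<phi>)))"
proof -
  have twirl: "(\<Sum>g\<in>G. w g * inner_n n (apply_op n (tensor_pow n (g ** h')) \<psi>)
                                  (apply_op n E (apply_op n (tensor_pow n (g ** h')) \<phi>)))
    = (\<Sum>ys\<in>tuples n. \<Sum>zs\<in>tuples n. cnj (\<psi> ys) * \<phi> zs * (\<Sum>g\<in>G. w g * tensor_conj n (g ** h') E ys zs))"
    for h'
    by (simp add: inner_tensor_conj sum_distrib_left sum_distrib_right mult_ac sum_rotate3[where A=G])
  show ?thesis
    using twirl[of h] twirl[of "mat 1"] tensor_conj_right_invariant[OF assms] by simp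
qed

end

section \<open>Sesquilinear forms\<close>

definition sesq :: "complex^'d^'d \<Rightarrow> complex^'d \<Rightarrow> complex^'d \<Rightarrow> complex" where
  "sesq M a b = (\<Sum>i\<in>UNIV. \<Sum>j\<in>UNIV. cnj (a$i) * M$i$j * b$j)"

lemma sesq_add_left: "sesq M (a + b) c = sesq M a c + sesq M b c"
  unfolding sesq_def by (simp add: distrib_right sum.distrib)

lemma sesq_add_right: "sesq M a (b + c) = sesq M a b + sesq M a c"
  unfolding sesq_def by (simp add: distrib_left sum.distrib)

lemma sesq_diff_right: "sesq M a (b - c) = sesq M a b - sesq M a c"
  unfolding sesq_def by (simp add: right_diff_distrib sum_subtractf)

lemma sesq_scale_left: "sesq M (c *s a) b = cnj c * sesq M a b"
  unfolding sesq_def by (simp add: sum_distrib_left mult_ac)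

lemma sesq_scale_right: "sesq M a (c *s b) = c * sesq M a b"
  unfolding sesq_def by (simp add: sum_distrib_left mult_ac)

lemma sesq_zero_left [simp]: "sesq M 0 b = 0"
  and sesq_zero_right [simp]: "sesq M a 0 = 0"
  unfolding sesq_def by simp_all

lemma sesq_sum_left: "finite K \<Longrightarrow> sesq M (\<Sum>k\<in>K. f k) b = (\<Sum>k\<in>K. sesq M (f k) b)"
  by (induction K rule: finite_induct) (simp_all add: sesq_add_left)

lemma sesq_sum_right: "finite K \<Longrightarrow> sesq M a (\<Sum>k\<in>K. f k) = (\<Sum>k\<in>K. sesq M a (f k))"
  by (induction K rule: finite_induct) (simp_all add: sesq_add_right)

lemma sesq_sum_matrix: "finite H \<Longrightarrow> sesq (\<Sum>h\<in>H. M h) a b = (\<Sum>h\<in>H. sesq (M h) a b)"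
  unfolding sesq_def by (simp add: sum_distrib_left sum_distrib_right sum_rotate3[where A=H])

lemma sesq_matrix_lincomb: "sesq (\<chi> i j. c * M$i$j - N$i$j) a b = c * sesq M a b - sesq N a b"
  unfolding sesq_def by (simp add: algebra_simps sum_subtractf sum_distrib_left)

lemma sesq_matrix_vector_mult: "sesq M (P *v a) (P *v b) = sesq (cadj P ** M ** P) a b"
proof -
  have "sesq M (P *v a) (P *v b) = (\<Sum>i\<in>UNIV. \<Sum>j\<in>UNIV. \<Sum>k\<in>UNIV. \<Sum>l\<in>UNIV.
      cnj (a$k) * (cnj (P$i$k) * M$i$j * P$j$l) * b$l)"
    unfolding sesq_def matrix_vector_mult_def
    by (simp add: sum_distrib_left sum_distrib_right mult_ac)
  also have "\<dots> = (\<Sum>k\<in>UNIV. \<Sum>l\<in>UNIV. \<Sum>i\<in>UNIV. \<Sum>j\<in>UNIV.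
      cnj (a$k) * (cnj (P$i$k) * M$i$j * P$j$l) * b$l)"
    by (rule sum_swap_pairs)
  also have "\<dots> = (\<Sum>k\<in>UNIV. \<Sum>l\<in>UNIV. \<Sum>j\<in>UNIV. \<Sum>i\<in>UNIV.
      cnj (a$k) * (cnj (P$i$k) * M$i$j * P$j$l) * b$l)"
    by (intro sum.cong refl sum.swap)
  also have "\<dots> = sesq (cadj P ** M ** P) a b"
    unfolding sesq_def matrix_matrix_mult_def cadj_def
    by (simp add: sum_distrib_left sum_distrib_right mult_ac)
  finally show ?thesis .
qed

lemma matrix_vector_mult_sum:
  "finite K \<Longrightarrow> (M::'a::comm_ring_1^'d^'e) *v (\<Sum>k\<in>K. f k) = (\<Sum>k\<in>K. M *v f k)"
  by (induction K rule: finite_induct) (auto simp: matrix_vector_right_distrib)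

definition fourier_sum :: "(complex^'d \<Rightarrow> complex^'d \<Rightarrow> complex) \<Rightarrow> (complex^'d) list \<Rightarrow> complex^'d \<Rightarrow> complex^'d"
  where "fourier_sum B os x = (\<Sum>k<length os. B (os!k) x *s os!k)"

fun orthonormalize :: "(complex^'d \<Rightarrow> complex^'d \<Rightarrow> complex) \<Rightarrow> (complex^'d) list \<Rightarrow> (complex^'d) list" where
  "orthonormalize B [] = []"
| "orthonormalize B (v # vs) = (let os = orthonormalize B vs; w = v - fourier_sum B os v in
     if w = 0 then os else (complex_of_real (inverse (sqrt (Re (B w w)))) *s w) # os)"

locale hermitian_pd =
  fixes Gm :: "complex^'d::finite^'d"
  assumes hermitian: "\<And>a b. sesq Gm b a = cnj (sesq Gm a b)"
    and nonneg: "\<And>a. Re (sesq Gm a a) \<ge> 0"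
    and definite: "\<And>a. sesq Gm a a = 0 \<Longrightarrow> a = 0"
begin

definition orthonormal :: "(complex^'d) list \<Rightarrow> bool" where
  "orthonormal os \<longleftrightarrow> (\<forall>i<length os. \<forall>j<length os. sesq Gm (os!i) (os!j) = of_bool (i = j))"

lemma sesq_self_real: "sesq Gm a a = complex_of_real (Re (sesq Gm a a))"
  using hermitian[of a a] by (simp add: complex_eq_iff)

lemma sesq_fourier_sum:
  assumes "orthonormal os" and "j < length os"
  shows "sesq Gm (os!j) (fourier_sum (sesq Gm) os v) = sesq Gm (os!j) v"
proof -
  have "sesq Gm (os!j) (fourier_sum (sesq Gm) os v) = (\<Sum>k<length os. sesq Gm (os!k) v * sesq Gm (os!j) (os!k))"
    unfolding fourier_sum_def by (simp add: sesq_sum_right sesq_scale_right)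
  also have "\<dots> = (\<Sum>k<length os. of_bool (k = j) * sesq Gm (os!k) v)"
    using assms unfolding orthonormal_def by (intro sum.cong refl) auto
  finally show ?thesis
    using assms(2) by simp
qed

lemma sesq_normalized:
  assumes "w \<noteq> 0"
  defines "o0 \<equiv> complex_of_real (inverse (sqrt (Re (sesq Gm w w)))) *s w"
  shows "sesq Gm o0 o0 = 1" and "sesq Gm o0 w *s o0 = w"
proof -
  define \<beta> where "\<beta> = Re (sesq Gm w w)"
  define c where "c = inverse (sqrt \<beta>)"
  have "\<beta> \<noteq> 0"
    using definite[of w] assms(1) sesq_self_real[of w] unfolding \<beta>_def by auto
  then have "\<beta> > 0"
    using nonneg[of w] unfolding \<beta>_def by simp
  then have c: "c * c * \<beta> = 1" "c * \<beta> * c = 1"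
    unfolding c_def by (simp_all add: field_simps)
  have o0: "o0 = complex_of_real c *s w"
    unfolding o0_def c_def \<beta>_def ..
  have ww: "sesq Gm w w = complex_of_real \<beta>"
    using sesq_self_real[of w] unfolding \<beta>_def by simp
  have "sesq Gm o0 o0 = complex_of_real (c * c * \<beta>)"
    unfolding o0 by (simp add: sesq_scale_left sesq_scale_right ww)
  then show "sesq Gm o0 o0 = 1"
    unfolding c by simp
  have "sesq Gm o0 w *s o0 = complex_of_real (c * \<beta> * c) *s w"
    unfolding o0 by (simp add: sesq_scale_left ww vector_smult_assoc)
  then show "sesq Gm o0 w *s o0 = w"
    unfolding c by simp
qed

lemma orthonormal_Cons:
  assumes on: "orthonormal os" and w: "w = v - fourier_sum (sesq Gm) os v" "w \<noteq> 0"
  defines "o0 \<equiv> complex_of_real (inverse (sqrt (Re (sesq Gm w w)))) *s w"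
  shows "orthonormal (o0 # os)" and "fourier_sum (sesq Gm) (o0 # os) v = v"
    and "fourier_sum (sesq Gm) os u = u \<Longrightarrow> fourier_sum (sesq Gm) (o0 # os) u = u"
proof -
  have os_w: "sesq Gm (os!k) w = 0" if "k < length os" for k
    using sesq_fourier_sum[OF on that] unfolding w(1) by (simp add: sesq_diff_right)
  have os_o0: "sesq Gm (os!k) o0 = 0" "sesq Gm o0 (os!k) = 0" if "k < length os" for k
    using os_w[OF that] hermitian[of "os!k" w]
    unfolding o0_def by (simp_all add: sesq_scale_left sesq_scale_right)
  show "orthonormal (o0 # os)"
    unfolding orthonormal_def
  proof (intro allI impI)
    fix i j assume "i < length (o0 # os)" "j < length (o0 # os)"
    then show "sesq Gm ((o0 # os) ! i) ((o0 # os) ! j) = of_bool (i = j)"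
      using on sesq_normalized(1)[OF w(2), folded o0_def] os_o0
      unfolding orthonormal_def by (cases i; cases j) auto
  qed
  have extend: "fourier_sum (sesq Gm) (o0 # os) u = sesq Gm o0 u *s o0 + fourier_sum (sesq Gm) os u" for u
    unfolding fourier_sum_def by (simp only: length_Cons sum.lessThan_Suc_shift nth_Cons_0 nth_Cons_Suc)
  have o0_fourier_sum: "sesq Gm o0 (fourier_sum (sesq Gm) os u) = 0" for u
    unfolding fourier_sum_def by (simp add: sesq_sum_right sesq_scale_right os_o0(2))
  have "sesq Gm o0 v = sesq Gm o0 w"
    unfolding w(1) by (simp add: sesq_diff_right o0_fourier_sum)
  then show "fourier_sum (sesq Gm) (o0 # os) v = v"
    unfolding extend using sesq_normalized(2)[OF w(2), folded o0_def] w(1) by simp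
  assume u: "fourier_sum (sesq Gm) os u = u"
  then have "sesq Gm o0 u = 0"
    using o0_fourier_sum[of u] by simp
  then show "fourier_sum (sesq Gm) (o0 # os) u = u"
    unfolding extend u by simp
qed

lemma orthonormalize:
  "orthonormal (orthonormalize (sesq Gm) vs) \<and>
   (\<forall>v\<in>set vs. fourier_sum (sesq Gm) (orthonormalize (sesq Gm) vs) v = v)"
proof (induction vs)
  case Nil
  then show ?case by (simp add: orthonormal_def)
next
  case (Cons v vs)
  define os where "os = orthonormalize (sesq Gm) vs"
  define w where "w = v - fourier_sum (sesq Gm) os v"
  have step: "orthonormalize (sesq Gm) (v # vs) =
      (if w = 0 then os else complex_of_real (inverse (sqrt (Re (sesq Gm w w)))) *s w # os)"
    unfolding orthonormalize.simps Let_def os_def[symmetric] w_def[symmetric] ..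
  show ?case
  proof (cases "w = 0")
    case True
    then show ?thesis
      using Cons.IH unfolding step os_def[symmetric] by (simp add: w_def)
  next
    case False
    have on: "orthonormal os" and fixes_vs: "\<forall>u\<in>set vs. fourier_sum (sesq Gm) os u = u"
      using Cons.IH unfolding os_def by auto
    show ?thesis
      unfolding step if_not_P[OF False]
      using orthonormal_Cons[OF on w_def False] fixes_vs by auto
  qed
qed

lemma exists_orthonormal_basis: "\<exists>os. orthonormal os \<and> (\<forall>x. fourier_sum (sesq Gm) os x = x)"
proof -
  obtain es :: "'d list" where es: "set es = UNIV"
    using finite_list[of "UNIV :: 'd set"] by auto
  define os where "os = orthonormalize (sesq Gm) (map (\<lambda>i. axis i 1) es)"
  have on: "orthonormal os" and axis: "\<And>i. fourier_sum (sesq Gm) os (axis i 1) = axis i 1"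
    using orthonormalize[of "map (\<lambda>i. axis i 1) es"] es unfolding os_def by auto
  have "fourier_sum (sesq Gm) os x $ j = x $ j" for x j
  proof -
    have coords: "sesq Gm (os!k) x = (\<Sum>i\<in>UNIV. x$i * sesq Gm (os!k) (axis i 1))" for k
      by (subst basis_expansion[symmetric, of x]) (simp add: sesq_sum_right sesq_scale_right)
    have "fourier_sum (sesq Gm) os x $ j = (\<Sum>k<length os. sesq Gm (os!k) x * os!k$j)"
      unfolding fourier_sum_def by simp
    also have "\<dots> = (\<Sum>k<length os. \<Sum>i\<in>UNIV. x$i * (sesq Gm (os!k) (axis i 1) * os!k$j))"
      by (simp only: coords sum_distrib_right mult.assoc)
    also have "\<dots> = (\<Sum>i\<in>UNIV. \<Sum>k<length os. x$i * (sesq Gm (os!k) (axis i 1) * os!k$j))"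
      by (rule sum.swap)
    also have "\<dots> = (\<Sum>i\<in>UNIV. x$i * fourier_sum (sesq Gm) os (axis i 1) $ j)"
      unfolding fourier_sum_def by (simp only: sum_component vector_smult_component sum_distrib_left)
    also have "\<dots> = (\<Sum>i\<in>UNIV. x$i *s axis i 1) $ j"
      by (simp only: axis sum_component vector_smult_component)
    finally show ?thesis
      by (simp only: basis_expansion)
  qed
  then have "fourier_sum (sesq Gm) os x = x" for x
    by (simp add: Finite_Cartesian_Product.vec_eq_iff)
  then show ?thesis
    using on by blast
qed

end

section \<open>Unitary representations of finite groups\<close>

lemma complex_matrix_has_eigenvector:
  fixes M :: "complex^'d::finite^'d"
  obtains k v where "v \<noteq> 0" and "M *v v = k *s v"
proof -
  define n where "n = CARD('d)"
  obtain e :: "nat \<Rightarrow> 'd" where e: "bij_betw e {0..<n} UNIV"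
    using ex_bij_betw_nat_finite[of "UNIV :: 'd set"] unfolding n_def by auto
  define ei where "ei = inv_into {0..<n} e"
  have e_ei: "e (ei j) = j" for j
    unfolding ei_def using e by (simp add: bij_betw_inv_into_right)
  have ei_e: "i < n \<Longrightarrow> ei (e i) = i" for i
    unfolding ei_def using e by (simp add: bij_betw_inv_into_left)
  have ei_less: "ei j < n" for j
    unfolding ei_def using e by (metis atLeastLessThan_iff bij_betw_def inv_into_into UNIV_I)
  define A where "A = Matrix.mat n n (\<lambda>(i,j). M $ e i $ e j)"
  have A: "A \<in> carrier_mat n n" unfolding A_def by simp
  have "n > 0" unfolding n_def by simp
  then obtain k where "eigenvalue A k"
    using spectrum_non_empty[OF A] unfolding spectrum_def by auto
  then obtain v where v: "v \<in> carrier_vec n" "v \<noteq> 0\<^sub>v n" "A *\<^sub>v v = k \<cdot>\<^sub>v v"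
    unfolding eigenvalue_def eigenvector_def using A by auto
  define w where "w = (\<chi> j. vec_index v (ei j))"
  show thesis
  proof
    show "w \<noteq> 0"
    proof
      assume "w = 0"
      then have "vec_index v i = 0" if "i < n" for i
        using that ei_e[OF that] unfolding w_def by (metis vec_lambda_beta zero_index)
      then have "v = 0\<^sub>v n" using v(1) by auto
      then show False using v(2) by simp
    qed
    show "M *v w = k *s w"
      unfolding Finite_Cartesian_Product.vec_eq_iff
    proof
      fix j
      have "(M *v w) $ j = (\<Sum>l\<in>UNIV. M $ j $ l * vec_index v (ei l))"
        unfolding w_def matrix_vector_mult_def by simp
      also have "\<dots> = (\<Sum>l\<in>{0..<n}. M $ j $ e l * vec_index v l)"
        by (rule sum.reindex_bij_betw[OF e, symmetric, THEN trans]) (simp add: ei_e)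
      also have "\<dots> = vec_index (A *\<^sub>v v) (ei j)"
        using ei_less[of j] v(1) unfolding A_def
        by (auto simp: scalar_prod_def e_ei intro!: sum.cong)
      also have "\<dots> = k * vec_index v (ei j)" using v(3) ei_less[of j] v(1) by simp
      finally show "(M *v w) $ j = (k *s w) $ j" unfolding w_def by simp
    qed
  qed
qed

lemma irreducible_commutant_scalar:
  fixes \<rho> :: "('q::finite) cmat \<Rightarrow> complex^'d::finite^'d"
  assumes irreducible: "irreducible_rep G \<rho>"
    and commutes: "\<And>g b. g \<in> G \<Longrightarrow> X *v (\<rho> g *v b) = \<rho> g *v (X *v b)"
  obtains k where "\<And>b. X *v b = k *s b"
proof -
  obtain k v where v: "v \<noteq> 0" "X *v v = k *s v"
    by (rule complex_matrix_has_eigenvector)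
  define W where "W = {w. X *v w = k *s w}"
  have "csubspace_vec W"
    unfolding csubspace_vec_def W_def
    by (auto simp: matrix_vector_right_distrib vector_add_ldistrib vector_scalar_commute
        vector_smult_assoc mult.commute)
  moreover have "\<forall>g\<in>G. \<forall>w\<in>W. \<rho> g *v w \<in> W"
    unfolding W_def by (simp add: commutes vector_scalar_commute)
  ultimately have "W = {0} \<or> W = UNIV"
    using irreducible unfolding irreducible_rep_def by blast
  moreover have "v \<in> W"
    using v unfolding W_def by simp
  ultimately have "W = UNIV"
    using v(1) by blast
  then show thesis
    using that unfolding W_def by blast
qed

locale finite_unitary_group =
  fixes G :: "('q::finite) cmat set"
  assumes subgroup: "finite_unitary_subgroup G"
begin

lemma finite_G: "finite G"
  and one_mem: "mat 1 \<in> G"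
  and mult_mem: "g \<in> G \<Longrightarrow> h \<in> G \<Longrightarrow> g ** h \<in> G"
  and adj_mem: "g \<in> G \<Longrightarrow> cadj g \<in> G"
  and subset_unitary: "G \<subseteq> unitary_group"
  using subgroup unfolding finite_unitary_subgroup_def by auto

lemma mult_adj: "g \<in> G \<Longrightarrow> g ** cadj g = mat 1"
  and adj_mult: "g \<in> G \<Longrightarrow> cadj g ** g = mat 1"
  using subset_unitary unitary_groupD by blast+

lemma card_pos: "card G > 0"
  using finite_G one_mem card_gt_0_iff by blast

lemma sum_left_mult: "g \<in> G \<Longrightarrow> (\<Sum>h\<in>G. f (g ** h)) = (\<Sum>h\<in>G. f h)"
  by (rule sum.reindex_bij_witness[where i="\<lambda>h. cadj g ** h" and j="\<lambda>h. g ** h"])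
    (auto simp: matrix_mul_assoc mult_adj adj_mult mult_mem adj_mem)

lemma sum_right_mult: "g \<in> G \<Longrightarrow> (\<Sum>h\<in>G. f (h ** g)) = (\<Sum>h\<in>G. f h)"
  by (rule sum.reindex_bij_witness[where i="\<lambda>h. h ** cadj g" and j="\<lambda>h. h ** g"])
    (auto simp: matrix_mul_assoc[symmetric] mult_adj adj_mult mult_mem adj_mem)

end

locale unitary_rep = finite_unitary_group G + hermitian_pd Gm
  for G :: "('q::finite) cmat set" and Gm :: "complex^'d::finite^'d" +
  fixes \<rho> :: "'q cmat \<Rightarrow> complex^'d^'d"
  assumes representation: "representation G \<rho>"
    and invariant: "\<And>g a b. g \<in> G \<Longrightarrow> sesq Gm (\<rho> g *v a) (\<rho> g *v b) = sesq Gm a b"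
begin

lemma rho_one: "\<rho> (mat 1) = mat 1"
  using representation unfolding representation_def by simp

lemma rho_mult_vec: "g \<in> G \<Longrightarrow> h \<in> G \<Longrightarrow> \<rho> (g ** h) *v x = \<rho> g *v (\<rho> h *v x)"
  using representation unfolding representation_def by (simp add: matrix_vector_mul_assoc)

lemma rho_adj_cancel: "\<rho> g *v (\<rho> (cadj g) *v x) = x" if "g \<in> G"
  using rho_mult_vec[OF that adj_mem[OF that]] by (simp add: mult_adj[OF that] rho_one)

definition basis :: "(complex^'d) list" where
  "basis = (SOME os. orthonormal os \<and> (\<forall>x. fourier_sum (sesq Gm) os x = x))"

abbreviation "dim_basis \<equiv> length basis"

lemma basis_orthonormal:
  "i < dim_basis \<Longrightarrow> j < dim_basis \<Longrightarrow> sesq Gm (basis!i) (basis!j) = of_bool (i = j)"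
  using someI_ex[OF exists_orthonormal_basis, folded basis_def] unfolding orthonormal_def by blast

lemma expand_in_basis: "x = (\<Sum>k<dim_basis. sesq Gm (basis!k) x *s basis!k)"
  using someI_ex[OF exists_orthonormal_basis, folded basis_def] unfolding fourier_sum_def by simp

lemma sesq_in_basis:
  "sesq M x y = (\<Sum>p<dim_basis. \<Sum>q<dim_basis.
     cnj (sesq Gm (basis!p) x) * sesq Gm (basis!q) y * sesq M (basis!p) (basis!q))"
proof -
  have "sesq M x y = (\<Sum>q<dim_basis. \<Sum>p<dim_basis.
     cnj (sesq Gm (basis!p) x) * sesq Gm (basis!q) y * sesq M (basis!p) (basis!q))"
    by (subst expand_in_basis[of x], subst expand_in_basis[of y])
      (simp add: sesq_sum_left sesq_sum_right sesq_scale_left sesq_scale_right sum_distrib_left mult_ac)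
  also have "\<dots> = (\<Sum>p<dim_basis. \<Sum>q<dim_basis.
     cnj (sesq Gm (basis!p) x) * sesq Gm (basis!q) y * sesq M (basis!p) (basis!q))"
    by (rule sum.swap)
  finally show ?thesis .
qed

definition coeff :: "'q cmat \<Rightarrow> nat \<Rightarrow> nat \<Rightarrow> complex" where
  "coeff g p q = sesq Gm (basis!p) (\<rho> g *v basis!q)"

lemma rho_basis: "\<rho> g *v basis!q = (\<Sum>r<dim_basis. coeff g r q *s basis!r)"
  unfolding coeff_def by (rule expand_in_basis)

lemma coeff_mult:
  assumes "g \<in> G" "h \<in> G"
  shows "coeff (g ** h) p q = (\<Sum>r<dim_basis. coeff g p r * coeff h r q)"
proof -
  have "coeff (g ** h) p q = sesq Gm (basis!p) (\<rho> g *v (\<rho> h *v basis!q))"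
    unfolding coeff_def rho_mult_vec[OF assms] ..
  also have "\<dots> = sesq Gm (basis!p) (\<rho> g *v (\<Sum>r<dim_basis. coeff h r q *s basis!r))"
    by (simp only: rho_basis[of h])
  also have "\<dots> = (\<Sum>r<dim_basis. coeff h r q * coeff g p r)"
    unfolding coeff_def[of g]
    by (simp add: matrix_vector_mult_sum vector_scalar_commute sesq_sum_right sesq_scale_right)
  finally show ?thesis
    by (simp add: mult.commute)
qed

lemma coeff_adj:
  assumes "g \<in> G"
  shows "coeff (cadj g) p q = cnj (coeff g q p)"
proof -
  have "coeff (cadj g) p q = sesq Gm (\<rho> g *v basis!p) (\<rho> g *v (\<rho> (cadj g) *v basis!q))"
    unfolding coeff_def invariant[OF assms] ..
  also have "\<dots> = sesq Gm (\<rho> g *v basis!p) (basis!q)"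
    unfolding rho_adj_cancel[OF assms] ..
  also have "\<dots> = cnj (coeff g q p)"
    unfolding coeff_def by (rule hermitian)
  finally show ?thesis .
qed

lemma coeff_columns_orthonormal:
  assumes g: "g \<in> G" and "p < dim_basis" "q < dim_basis"
  shows "(\<Sum>r<dim_basis. cnj (coeff g r p) * coeff g r q) = of_bool (p = q)"
proof -
  have "(\<Sum>r<dim_basis. cnj (coeff g r p) * coeff g r q) = (\<Sum>r<dim_basis. coeff (cadj g) p r * coeff g r q)"
    unfolding coeff_adj[OF g] ..
  also have "\<dots> = coeff (cadj g ** g) p q"
    unfolding coeff_mult[OF adj_mem[OF g] g] ..
  also have "\<dots> = sesq Gm (basis!p) (basis!q)"
    unfolding adj_mult[OF g] coeff_def rho_one by (simp only: matrix_vector_mul_lid)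
  also have "\<dots> = of_bool (p = q)"
    using assms(2,3) by (rule basis_orthonormal)
  finally show ?thesis .
qed

lemma character_in_basis: "character \<rho> g = (\<Sum>p<dim_basis. coeff g p p)"
proof -
  have "character \<rho> g = (\<Sum>i\<in>UNIV. (\<rho> g *v axis i 1) $ i)"
    unfolding character_def Determinants.trace_def
  proof (intro sum.cong refl)
    fix i
    have "(\<rho> g *v axis i 1) $ i = (\<Sum>j\<in>UNIV. \<rho> g $ i $ j * axis i 1 $ j)"
      by (simp add: matrix_vector_mult_def)
    also have "\<dots> = (\<Sum>j\<in>UNIV. if j = i then \<rho> g $ i $ j else 0)"
      by (intro sum.cong refl) (simp add: axis_def)
    finally show "\<rho> g $ i $ i = (\<rho> g *v axis i 1) $ i"
      by simp
  qed
  also have "\<dots> = (\<Sum>i\<in>UNIV. \<Sum>p<dim_basis. sesq Gm (basis!p) (axis i 1) * (\<rho> g *v basis!p) $ i)"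
  proof (intro sum.cong refl)
    fix i
    have axis: "axis i (1::complex) = (\<Sum>p<dim_basis. sesq Gm (basis!p) (axis i 1) *s basis!p)"
      by (rule expand_in_basis)
    have "(\<rho> g *v axis i 1) $ i = (\<rho> g *v (\<Sum>p<dim_basis. sesq Gm (basis!p) (axis i 1) *s basis!p)) $ i"
      by (simp only: axis[symmetric])
    then show "(\<rho> g *v axis i 1) $ i = (\<Sum>p<dim_basis. sesq Gm (basis!p) (axis i 1) * (\<rho> g *v basis!p) $ i)"
      by (simp add: matrix_vector_mult_sum vector_scalar_commute)
  qed
  also have "\<dots> = (\<Sum>p<dim_basis. \<Sum>i\<in>UNIV. (\<rho> g *v basis!p) $ i * sesq Gm (basis!p) (axis i 1))"
    by (subst sum.swap) (simp add: mult.commute)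
  also have "\<dots> = (\<Sum>p<dim_basis. coeff g p p)"
  proof (intro sum.cong refl)
    fix p
    have "coeff g p p = sesq Gm (basis!p) (\<Sum>i\<in>UNIV. (\<rho> g *v basis!p) $ i *s axis i 1)"
      unfolding coeff_def Finite_Cartesian_Product.basis_expansion ..
    then show "(\<Sum>i\<in>UNIV. (\<rho> g *v basis!p) $ i * sesq Gm (basis!p) (axis i 1)) = coeff g p p"
      by (simp add: sesq_sum_right sesq_scale_right)
  qed
  finally show ?thesis .
qed

lemma sesq_rho_basis:
  "sesq Z (\<rho> g *v basis!p) (\<rho> g *v basis!q) =
   (\<Sum>p'<dim_basis. \<Sum>q'<dim_basis. cnj (coeff g p' p) * coeff g q' q * sesq Z (basis!p') (basis!q'))"
proof -
  have "sesq Z (\<rho> g *v basis!p) (\<rho> g *v basis!q) =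
      (\<Sum>q'<dim_basis. \<Sum>p'<dim_basis. cnj (coeff g p' p) * coeff g q' q * sesq Z (basis!p') (basis!q'))"
    unfolding rho_basis[of g p] rho_basis[of g q]
    by (simp add: sesq_sum_left sesq_sum_right sesq_scale_left sesq_scale_right sum_distrib_left mult_ac)
  also have "\<dots> = (\<Sum>p'<dim_basis. \<Sum>q'<dim_basis. cnj (coeff g p' p) * coeff g q' q * sesq Z (basis!p') (basis!q'))"
    by (rule sum.swap)
  finally show ?thesis .
qed

text \<open>With \<open>U\<^sub>g = (coeff g p q)\<^sub>p\<^sub>q\<close>, \<open>conj_coords z g = U\<^sub>g Z U\<^sub>g\<^sup>\<dagger>\<close> and
  \<open>twirl_coords z g = U\<^sub>g\<^sup>\<dagger> Z U\<^sub>g\<close> for the matrix \<open>Z = (z p q)\<^sub>p\<^sub>q\<close>.\<close>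

definition conj_coords :: "(nat \<Rightarrow> nat \<Rightarrow> complex) \<Rightarrow> 'q cmat \<Rightarrow> nat \<Rightarrow> nat \<Rightarrow> complex" where
  "conj_coords z g r s = (\<Sum>p<dim_basis. \<Sum>q<dim_basis. coeff g r p * z p q * cnj (coeff g s q))"

definition twirl_coords :: "(nat \<Rightarrow> nat \<Rightarrow> complex) \<Rightarrow> 'q cmat \<Rightarrow> nat \<Rightarrow> nat \<Rightarrow> complex" where
  "twirl_coords z g p q = (\<Sum>p'<dim_basis. \<Sum>q'<dim_basis. cnj (coeff g p' p) * coeff g q' q * z p' q')"

definition lift_coords :: "(nat \<Rightarrow> nat \<Rightarrow> complex) \<Rightarrow> 'q cmat \<Rightarrow> nat \<times> nat \<times> nat \<times> nat \<times> nat \<times> nat \<Rightarrow> complex"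
  where "lift_coords z g c = (case c of (a, p, b, q, r, s) \<Rightarrow>
    coeff g p a * cnj (coeff g q b) * cnj (conj_coords z g r s))"

lemma coeff_adj_mult:
  assumes "h \<in> G" "k \<in> G"
  shows "coeff (cadj h ** k) p q = (\<Sum>r<dim_basis. cnj (coeff h r p) * coeff k r q)"
  unfolding coeff_mult[OF adj_mem[OF assms(1)] assms(2)] coeff_adj[OF assms(1)] ..

lemma character_adj_mult:
  assumes "h \<in> G" "k \<in> G"
  shows "character \<rho> (cadj h ** k) = (\<Sum>a<dim_basis. \<Sum>p<dim_basis. cnj (coeff h p a) * coeff k p a)"
  unfolding character_in_basis coeff_adj_mult[OF assms] ..

lemma conj_coords_pairing:
  assumes h: "h \<in> G" and k: "k \<in> G"
  shows "(\<Sum>r<dim_basis. \<Sum>s<dim_basis. conj_coords z h r s * cnj (conj_coords z k r s))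
       = (\<Sum>p<dim_basis. \<Sum>q<dim_basis. cnj (z p q) * twirl_coords z (cadj h ** k) p q)"
proof -
  let ?I = "{..<dim_basis}"
  define P where "P r s p1 q1 p2 q2 = coeff h r p1 * z p1 q1 * cnj (coeff h s q1) *
    cnj (coeff k r p2) * cnj (z p2 q2) * coeff k s q2" for r s p1 q1 p2 q2
  have "(\<Sum>r\<in>?I. \<Sum>s\<in>?I. conj_coords z h r s * cnj (conj_coords z k r s))
      = (\<Sum>r\<in>?I. \<Sum>s\<in>?I. \<Sum>p1\<in>?I. \<Sum>q1\<in>?I. \<Sum>p2\<in>?I. \<Sum>q2\<in>?I. P r s p1 q1 p2 q2)"
  proof (intro sum.cong refl)
    fix r s
    have "conj_coords z h r s * cnj (conj_coords z k r s) = (\<Sum>p1\<in>?I. \<Sum>q1\<in>?I. \<Sum>p2\<in>?I. \<Sum>q2\<in>?I.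
        (coeff h r p1 * z p1 q1 * cnj (coeff h s q1)) * cnj (coeff k r p2 * z p2 q2 * cnj (coeff k s q2)))"
      unfolding conj_coords_def cnj_sum by (rule sum_product2)
    then show "conj_coords z h r s * cnj (conj_coords z k r s) =
        (\<Sum>p1\<in>?I. \<Sum>q1\<in>?I. \<Sum>p2\<in>?I. \<Sum>q2\<in>?I. P r s p1 q1 p2 q2)"
      unfolding P_def by (simp add: mult_ac)
  qed
  also have "\<dots> = (\<Sum>p1\<in>?I. \<Sum>q1\<in>?I. \<Sum>r\<in>?I. \<Sum>s\<in>?I. \<Sum>p2\<in>?I. \<Sum>q2\<in>?I. P r s p1 q1 p2 q2)"
    by (rule sum_swap_pairs)
  also have "\<dots> = (\<Sum>p1\<in>?I. \<Sum>q1\<in>?I. \<Sum>p2\<in>?I. \<Sum>q2\<in>?I. \<Sum>r\<in>?I. \<Sum>s\<in>?I. P r s p1 q1 p2 q2)"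
    by (intro sum.cong refl sum_swap_pairs)
  also have "\<dots> = (\<Sum>p2\<in>?I. \<Sum>q2\<in>?I. \<Sum>p1\<in>?I. \<Sum>q1\<in>?I. \<Sum>r\<in>?I. \<Sum>s\<in>?I. P r s p1 q1 p2 q2)"
    by (rule sum_swap_pairs)
  also have "\<dots> = (\<Sum>p2\<in>?I. \<Sum>q2\<in>?I. \<Sum>p1\<in>?I. \<Sum>q1\<in>?I. cnj (z p2 q2) *
      ((\<Sum>r\<in>?I. coeff h r p1 * cnj (coeff k r p2)) * (\<Sum>s\<in>?I. cnj (coeff h s q1) * coeff k s q2) * z p1 q1))"
    unfolding P_def
    by (intro sum.cong refl)
      (simp add: sum_product sum_distrib_left sum_distrib_right mult_ac, subst sum.swap, simp add: mult_ac)
  also have "\<dots> = (\<Sum>p\<in>?I. \<Sum>q\<in>?I. cnj (z p q) * twirl_coords z (cadj h ** k) p q)"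
    unfolding twirl_coords_def coeff_adj_mult[OF h k]
    by (intro sum.cong refl) (simp add: sum_distrib_left)
  finally show ?thesis .
qed

abbreviation "six_indices \<equiv> {..<dim_basis} \<times> {..<dim_basis} \<times> {..<dim_basis} \<times> {..<dim_basis} \<times>
  {..<dim_basis} \<times> {..<dim_basis}"

lemma sum_six_indices:
  "(\<Sum>c\<in>six_indices. f c) = (\<Sum>a<dim_basis. \<Sum>p<dim_basis. \<Sum>b<dim_basis. \<Sum>q<dim_basis. \<Sum>r<dim_basis. \<Sum>s<dim_basis.
     f (a, p, b, q, r, s))"
  by (simp only: sum.cartesian_product')

lemma lift_coords_pairing:
  assumes h: "h \<in> G" and k: "k \<in> G"
  shows "(\<Sum>c\<in>six_indices. cnj (lift_coords z h c) * lift_coords z k c)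
    = character \<rho> (cadj h ** k) * cnj (character \<rho> (cadj h ** k)) *
      (\<Sum>p<dim_basis. \<Sum>q<dim_basis. cnj (z p q) * twirl_coords z (cadj h ** k) p q)"
proof -
  let ?I = "{..<dim_basis}"
  have "(\<Sum>c\<in>six_indices. cnj (lift_coords z h c) * lift_coords z k c)
      = (\<Sum>a\<in>?I. \<Sum>p\<in>?I. \<Sum>b\<in>?I. \<Sum>q\<in>?I. \<Sum>r\<in>?I. \<Sum>s\<in>?I.
           (cnj (coeff h p a) * coeff k p a) * ((coeff h q b * cnj (coeff k q b)) *
           (conj_coords z h r s * cnj (conj_coords z k r s))))"
    unfolding sum_six_indices lift_coords_def by (intro sum.cong refl) (simp add: mult_ac)
  also have "\<dots> = (\<Sum>a\<in>?I. \<Sum>p\<in>?I. cnj (coeff h p a) * coeff k p a) *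
      ((\<Sum>b\<in>?I. \<Sum>q\<in>?I. coeff h q b * cnj (coeff k q b)) *
       (\<Sum>r\<in>?I. \<Sum>s\<in>?I. conj_coords z h r s * cnj (conj_coords z k r s)))"
    unfolding sum_product2[where f="\<lambda>b q. coeff h q b * cnj (coeff k q b)"]
      sum_product2[where f="\<lambda>a p. cnj (coeff h p a) * coeff k p a"]
    by (intro sum.cong refl) (simp add: sum_distrib_left)
  also have "(\<Sum>b\<in>?I. \<Sum>q\<in>?I. coeff h q b * cnj (coeff k q b)) = cnj (character \<rho> (cadj h ** k))"
    unfolding character_adj_mult[OF h k] by (simp add: mult.commute)
  finally show ?thesis
    unfolding character_adj_mult[OF h k, symmetric] conj_coords_pairing[OF h k] by (simp add: mult_ac)
qed

lemma lift_coords_contraction: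
  assumes h: "h \<in> G" and ab: "a < dim_basis" "b < dim_basis"
  shows "(\<Sum>p<dim_basis. \<Sum>q<dim_basis. lift_coords z h (a, p, b, q, p, q)) = cnj (z a b)"
proof -
  let ?I = "{..<dim_basis}"
  define Q where "Q p q p' q' = cnj (z p' q') * (coeff h p a * cnj (coeff h p p')) *
    (cnj (coeff h q b) * coeff h q q')" for p q p' q'
  have "(\<Sum>p\<in>?I. \<Sum>q\<in>?I. lift_coords z h (a, p, b, q, p, q)) = (\<Sum>p\<in>?I. \<Sum>q\<in>?I. \<Sum>p'\<in>?I. \<Sum>q'\<in>?I. Q p q p' q')"
  proof (intro sum.cong refl)
    fix p q
    show "lift_coords z h (a, p, b, q, p, q) = (\<Sum>p'\<in>?I. \<Sum>q'\<in>?I. Q p q p' q')"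
      unfolding lift_coords_def conj_coords_def Q_def by (simp add: sum_distrib_left mult_ac)
  qed
  also have "\<dots> = (\<Sum>p'\<in>?I. \<Sum>q'\<in>?I. \<Sum>p\<in>?I. \<Sum>q\<in>?I. Q p q p' q')"
    by (rule sum_swap_pairs)
  also have "\<dots> = (\<Sum>p'\<in>?I. \<Sum>q'\<in>?I. cnj (z p' q') *
      (\<Sum>p\<in>?I. coeff h p a * cnj (coeff h p p')) * (\<Sum>q\<in>?I. cnj (coeff h q b) * coeff h q q'))"
    unfolding Q_def by (intro sum.cong refl sum_sum_mult_separable)
  also have "\<dots> = (\<Sum>p'\<in>?I. \<Sum>q'\<in>?I. of_bool (p' = a) * (of_bool (b = q') * cnj (z p' q')))"
  proof (intro sum.cong refl)
    fix p' q' assume "p' \<in> ?I" "q' \<in> ?I"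
    then have "(\<Sum>p\<in>?I. coeff h p a * cnj (coeff h p p')) = of_bool (p' = a)"
      and "(\<Sum>q\<in>?I. cnj (coeff h q b) * coeff h q q') = of_bool (b = q')"
      using coeff_columns_orthonormal[OF h, of p' a] coeff_columns_orthonormal[OF h, of b q'] ab
      by (simp_all only: lessThan_iff mult.commute simp_thms)
    then show "cnj (z p' q') * (\<Sum>p\<in>?I. coeff h p a * cnj (coeff h p p')) *
        (\<Sum>q\<in>?I. cnj (coeff h q b) * coeff h q q') = of_bool (p' = a) * (of_bool (b = q') * cnj (z p' q'))"
      by (simp only: mult_ac)
  qed
  also have "\<dots> = (\<Sum>p'\<in>?I. of_bool (p' = a) * (\<Sum>q'\<in>?I. of_bool (b = q') * cnj (z p' q')))"
    by (simp only: sum_distrib_left)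
  also have "\<dots> = cnj (z a b)"
    using ab by simp
  finally show ?thesis .
qed

text \<open>The sums \<open>S = \<Sum>\<^sub>h U\<^sub>h \<otimes> conj U\<^sub>h \<otimes> conj (U\<^sub>h Z U\<^sub>h\<^sup>\<dagger>)\<close> satisfy
  \<open>\<parallel>S\<parallel>\<^sup>2 = |G| \<langle>Z, \<Sum>\<^sub>g |\<chi>(g)|\<^sup>2 U\<^sub>g\<^sup>\<dagger> Z U\<^sub>g\<rangle>\<close>, and a contraction of \<open>S\<close> is \<open>|G| conj Z\<close>.\<close>

lemma twirl_coords_injective:
  assumes twirl: "\<And>p q. p < dim_basis \<Longrightarrow> q < dim_basis \<Longrightarrow>
      (\<Sum>g\<in>G. character \<rho> g * cnj (character \<rho> g) * twirl_coords z g p q) = 0"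
    and ab: "a < dim_basis" "b < dim_basis"
  shows "z a b = 0"
proof -
  define T where "T g = character \<rho> g * cnj (character \<rho> g) *
    (\<Sum>p<dim_basis. \<Sum>q<dim_basis. cnj (z p q) * twirl_coords z g p q)" for g
  define S where "S c = (\<Sum>h\<in>G. lift_coords z h c)" for c
  have "(\<Sum>g\<in>G. T g) = (\<Sum>p<dim_basis. \<Sum>q<dim_basis. cnj (z p q) *
      (\<Sum>g\<in>G. character \<rho> g * cnj (character \<rho> g) * twirl_coords z g p q))"
    unfolding T_def by (simp add: sum_distrib_left sum_distrib_right mult_ac sum_rotate3[where A=G])
  also have "\<dots> = 0"
    by (simp add: twirl)
  finally have T0: "(\<Sum>g\<in>G. T g) = 0" .
  have "(\<Sum>c\<in>six_indices. cnj (S c) * S c) = (\<Sum>h\<in>G. \<Sum>k\<in>G. \<Sum>c\<in>six_indices. cnj (lift_coords z h c) * lift_coords z k c)"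
    unfolding S_def by (simp add: sum_product cnj_sum) (rule sum_rotate3)
  also have "\<dots> = (\<Sum>h\<in>G. \<Sum>k\<in>G. T (cadj h ** k))"
    unfolding T_def by (intro sum.cong refl) (simp add: lift_coords_pairing)
  also have "\<dots> = of_nat (card G) * (\<Sum>g\<in>G. T g)"
    by (simp add: sum_left_mult[OF adj_mem])
  finally have "(\<Sum>c\<in>six_indices. cnj (S c) * S c) = 0"
    unfolding T0 by simp
  then have S0: "\<forall>c\<in>six_indices. S c = 0"
    by (simp add: sum_cnj_mult_self_eq_0_iff)
  have "of_nat (card G) * cnj (z a b) = (\<Sum>h\<in>G. \<Sum>p<dim_basis. \<Sum>q<dim_basis. lift_coords z h (a, p, b, q, p, q))"
    using lift_coords_contraction[OF _ ab] by simp
  also have "\<dots> = (\<Sum>p<dim_basis. \<Sum>q<dim_basis. S (a, p, b, q, p, q))"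
    unfolding S_def by (rule sum_rotate3)
  also have "\<dots> = 0"
    using S0 ab by simp
  finally show ?thesis
    using card_pos by simp
qed

lemma sesq_eq_0_if_weighted_twirl_eq_0:
  assumes "\<And>a b. (\<Sum>g\<in>G. complex_of_real ((cmod (character \<rho> g))\<^sup>2) * sesq Z (\<rho> g *v a) (\<rho> g *v b)) = 0"
  shows "sesq Z a b = 0"
proof -
  have "sesq Z (basis!p) (basis!q) = 0" if "p < dim_basis" "q < dim_basis" for p q
  proof (rule twirl_coords_injective[OF _ that])
    fix p q assume "p < dim_basis" "q < dim_basis"
    show "(\<Sum>g\<in>G. character \<rho> g * cnj (character \<rho> g) *
        twirl_coords (\<lambda>p q. sesq Z (basis!p) (basis!q)) g p q) = 0"
      using assms[of "basis!p" "basis!q"]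
      by (simp only: complex_norm_square twirl_coords_def sesq_rho_basis)
  qed
  then show ?thesis
    by (subst sesq_in_basis) simp
qed

lemma sesq_representing_matrix:
  obtains X where "\<And>a b. sesq K a b = sesq Gm a (X *v b)"
proof -
  define f where "f b = (\<Sum>k<dim_basis. sesq K (basis!k) b *s basis!k)" for b
  have K_f: "sesq K a b = sesq Gm a (f b)" for a b
  proof -
    have "sesq K a b = sesq K (\<Sum>k<dim_basis. sesq Gm (basis!k) a *s basis!k) b"
      by (subst (1) expand_in_basis[of a]) (rule refl)
    also have "\<dots> = (\<Sum>k<dim_basis. cnj (sesq Gm (basis!k) a) * sesq K (basis!k) b)"
      by (simp add: sesq_sum_left sesq_scale_left)
    also have "\<dots> = sesq Gm a (f b)"
    proof -
      have "cnj (sesq Gm (basis!k) a) = sesq Gm a (basis!k)" for k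
        using hermitian[of "basis!k" a] by simp
      then show ?thesis
        unfolding f_def by (simp add: sesq_sum_right sesq_scale_right mult.commute)
    qed
    finally show ?thesis .
  qed
  define X where "X = (\<chi> i j. f (axis j 1) $ i)"
  have X_f: "X *v b = f b" for b
    unfolding Finite_Cartesian_Product.vec_eq_iff
  proof
    fix i
    have coords: "sesq K (basis!k) b = (\<Sum>j\<in>UNIV. b$j * sesq K (basis!k) (axis j 1))" for k
      by (subst (1) basis_expansion[symmetric, of b]) (simp add: sesq_sum_right sesq_scale_right)
    have "(X *v b) $ i = (\<Sum>j\<in>UNIV. (\<Sum>k<dim_basis. sesq K (basis!k) (axis j 1) * basis!k$i) * b$j)"
      by (simp only: X_def f_def matrix_vector_mult_def vec_lambda_beta sum_component vector_smult_component)
    also have "\<dots> = (\<Sum>k<dim_basis. (\<Sum>j\<in>UNIV. b$j * sesq K (basis!k) (axis j 1)) * basis!k$i)"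
      by (rule sum_mult_sum_swap)
    also have "\<dots> = f b $ i"
      unfolding f_def by (simp only: coords sum_component vector_smult_component)
    finally show "(X *v b) $ i = f b $ i" .
  qed
  show thesis
  proof (rule that)
    fix a b
    show "sesq K a b = sesq Gm a (X *v b)"
      unfolding X_f by (rule K_f)
  qed
qed

lemma invariant_sesq_multiple:
  assumes irreducible: "irreducible_rep G \<rho>"
    and invariant_K: "\<And>g a b. g \<in> G \<Longrightarrow> sesq K (\<rho> g *v a) (\<rho> g *v b) = sesq K a b"
  obtains c where "\<And>a b. sesq K a b = c * sesq Gm a b"
proof -
  obtain X where X: "\<And>a b. sesq K a b = sesq Gm a (X *v b)"
    using sesq_representing_matrix[of K] by metis
  have commutes: "X *v (\<rho> g *v b) = \<rho> g *v (X *v b)" if g: "g \<in> G" for g b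
  proof -
    have "sesq Gm a (X *v (\<rho> g *v b)) = sesq Gm a (\<rho> g *v (X *v b))" for a
    proof -
      have "sesq Gm a (X *v (\<rho> g *v b)) = sesq K (\<rho> g *v (\<rho> (cadj g) *v a)) (\<rho> g *v b)"
        unfolding X[symmetric] rho_adj_cancel[OF g] ..
      also have "\<dots> = sesq K (\<rho> (cadj g) *v a) b"
        by (rule invariant_K[OF g])
      also have "\<dots> = sesq Gm (\<rho> (cadj g) *v a) (X *v b)"
        by (rule X)
      also have "\<dots> = sesq Gm (\<rho> g *v (\<rho> (cadj g) *v a)) (\<rho> g *v (X *v b))"
        by (rule invariant[OF g, symmetric])
      finally show ?thesis
        unfolding rho_adj_cancel[OF g] .
    qed
    from this[of "X *v (\<rho> g *v b) - \<rho> g *v (X *v b)"] show ?thesis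
      by (metis definite sesq_diff_right right_minus_eq)
  qed
  obtain k where k: "\<And>b. X *v b = k *s b"
    using irreducible_commutant_scalar[OF irreducible commutes] by metis
  show thesis
  proof (rule that)
    fix a b
    show "sesq K a b = k * sesq Gm a b"
      unfolding X k by (rule sesq_scale_right)
  qed
qed

definition group_average :: "complex^'d^'d \<Rightarrow> complex^'d^'d" where
  "group_average K = (\<Sum>h\<in>G. cadj (\<rho> h) ** K ** \<rho> h)"

lemma sesq_group_average: "sesq (group_average K) a b = (\<Sum>h\<in>G. sesq K (\<rho> h *v a) (\<rho> h *v b))"
  unfolding group_average_def by (simp add: sesq_sum_matrix[OF finite_G] sesq_matrix_vector_mult)

lemma sesq_group_average_invariant:
  assumes "g \<in> G"
  shows "sesq (group_average K) (\<rho> g *v a) (\<rho> g *v b) = sesq (group_average K) a b"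
proof -
  have "sesq (group_average K) (\<rho> g *v a) (\<rho> g *v b) =
      (\<Sum>h\<in>G. sesq K (\<rho> (h ** g) *v a) (\<rho> (h ** g) *v b))"
    unfolding sesq_group_average using assms by (intro sum.cong refl) (simp add: rho_mult_vec)
  also have "\<dots> = sesq (group_average K) a b"
    unfolding sesq_group_average by (rule sum_right_mult[OF assms, where f="\<lambda>h. sesq K (\<rho> h *v a) (\<rho> h *v b)"])
  finally show ?thesis .
qed

lemma weighted_twirl_right_invariant_average:
  assumes twirl: "\<And>h. h \<in> G \<Longrightarrow>
      (\<Sum>g\<in>G. w g * sesq K (\<rho> (g ** h) *v a) (\<rho> (g ** h) *v b)) = (\<Sum>g\<in>G. w g * sesq K (\<rho> g *v a) (\<rho> g *v b))"
  shows "of_nat (card G) * (\<Sum>g\<in>G. w g * sesq K (\<rho> g *v a) (\<rho> g *v b)) =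
    (\<Sum>g\<in>G. w g * sesq (group_average K) a b)"
proof -
  have "of_nat (card G) * (\<Sum>g\<in>G. w g * sesq K (\<rho> g *v a) (\<rho> g *v b))
      = (\<Sum>h\<in>G. \<Sum>g\<in>G. w g * sesq K (\<rho> (g ** h) *v a) (\<rho> (g ** h) *v b))"
    using twirl by simp
  also have "\<dots> = (\<Sum>g\<in>G. w g * (\<Sum>h\<in>G. sesq K (\<rho> (g ** h) *v a) (\<rho> (g ** h) *v b)))"
    by (subst sum.swap) (simp add: sum_distrib_left)
  also have "\<dots> = (\<Sum>g\<in>G. w g * sesq (group_average K) a b)"
    unfolding sesq_group_average using sum_left_mult[where f="\<lambda>h. sesq K (\<rho> h *v a) (\<rho> h *v b)"]
    by simp
  finally show ?thesis .
qed

text \<open>Subtracting the group average from \<open>|G| K\<close> leaves a form annihilated by the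
  character-weighted twirl.\<close>

lemma invariant_if_weighted_twirl_invariant:
  fixes K :: "complex^'d^'d"
  defines "w g \<equiv> complex_of_real ((cmod (character \<rho> g))\<^sup>2)"
  assumes twirl: "\<And>h a b. h \<in> G \<Longrightarrow>
      (\<Sum>g\<in>G. w g * sesq K (\<rho> (g ** h) *v a) (\<rho> (g ** h) *v b)) = (\<Sum>g\<in>G. w g * sesq K (\<rho> g *v a) (\<rho> g *v b))"
    and g: "g \<in> G"
  shows "sesq K (\<rho> g *v a) (\<rho> g *v b) = sesq K a b"
proof -
  define Z where "Z = (\<chi> i j. of_nat (card G) * K$i$j - group_average K $i$j)"
  have Z: "sesq Z a b = of_nat (card G) * sesq K a b - sesq (group_average K) a b" for a b
    unfolding Z_def by (rule sesq_matrix_lincomb)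
  have "(\<Sum>g\<in>G. w g * sesq Z (\<rho> g *v a) (\<rho> g *v b)) = 0" for a b
  proof -
    have "(\<Sum>g\<in>G. w g * sesq Z (\<rho> g *v a) (\<rho> g *v b)) =
        (\<Sum>g\<in>G. of_nat (card G) * (w g * sesq K (\<rho> g *v a) (\<rho> g *v b)) - w g * sesq (group_average K) a b)"
      unfolding Z by (intro sum.cong refl) (simp add: sesq_group_average_invariant right_diff_distrib mult_ac)
    also have "\<dots> = of_nat (card G) * (\<Sum>g\<in>G. w g * sesq K (\<rho> g *v a) (\<rho> g *v b)) -
        (\<Sum>g\<in>G. w g * sesq (group_average K) a b)"
      by (simp add: sum_subtractf sum_distrib_left)
    finally show ?thesis
      by (simp add: weighted_twirl_right_invariant_average[OF twirl])
  qed
  then have "sesq Z a b = 0" for a b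
    using sesq_eq_0_if_weighted_twirl_eq_0 unfolding w_def by blast
  then have K_avg: "of_nat (card G) * sesq K a b = sesq (group_average K) a b" for a b
    unfolding Z by simp
  have "of_nat (card G) * sesq K (\<rho> g *v a) (\<rho> g *v b) = of_nat (card G) * sesq K a b"
    unfolding K_avg sesq_group_average_invariant[OF g] ..
  then show ?thesis
    using card_pos by simp
qed

end

section \<open>The code space\<close>

lemma inner_n_hermitian: "inner_n n \<phi> \<psi> = cnj (inner_n n \<psi> \<phi>)"
  unfolding inner_n_def by (simp add: mult.commute)

lemma inner_n_self_nonneg: "Re (inner_n n \<psi> \<psi>) \<ge> 0"
proof -
  have "inner_n n \<psi> \<psi> = complex_of_real (\<Sum>xs\<in>tuples n. (cmod (\<psi> xs))\<^sup>2)"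
    unfolding inner_n_def by (simp only: of_real_sum complex_norm_square mult.commute)
  then show ?thesis
    by (simp add: sum_nonneg)
qed

lemma inner_n_lincomb:
  "inner_n n (\<lambda>xs. \<Sum>i\<in>UNIV. a$i * f i xs) (\<lambda>xs. \<Sum>j\<in>UNIV. b$j * h j xs)
   = sesq (\<chi> i j. inner_n n (f i) (h j)) a b"
proof -
  have "inner_n n (\<lambda>xs. \<Sum>i\<in>UNIV. a$i * f i xs) (\<lambda>xs. \<Sum>j\<in>UNIV. b$j * h j xs)
    = (\<Sum>xs\<in>tuples n. \<Sum>i\<in>UNIV. \<Sum>j\<in>UNIV. cnj (a$i) * (cnj (f i xs) * h j xs) * b$j)"
    unfolding inner_n_def by (simp add: sum_distrib_left sum_distrib_right mult_ac)
  also have "\<dots> = (\<Sum>i\<in>UNIV. \<Sum>j\<in>UNIV. \<Sum>xs\<in>tuples n. cnj (a$i) * (cnj (f i xs) * h j xs) * b$j)"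
    by (rule sum_rotate3)
  also have "\<dots> = sesq (\<chi> i j. inner_n n (f i) (h j)) a b"
    unfolding sesq_def inner_n_def by (simp add: sum_distrib_left sum_distrib_right mult_ac)
  finally show ?thesis .
qed

lemma apply_op_lincomb:
  "apply_op n E (\<lambda>xs. \<Sum>j\<in>UNIV. b$j * h j xs) = (\<lambda>xs. \<Sum>j\<in>UNIV. b$j * apply_op n E (h j) xs)"
proof
  fix xs
  show "apply_op n E (\<lambda>xs. \<Sum>j\<in>UNIV. b$j * h j xs) xs = (\<Sum>j\<in>UNIV. b$j * apply_op n E (h j) xs)"
    unfolding apply_op_def by (simp add: sum_distrib_left mult_ac sum.swap[of _ "tuples n"])
qed

locale code_space = finite_unitary_group G
  for G :: "('q::finite) cmat set" +
  fixes \<rho> :: "'q cmat \<Rightarrow> complex^'d::finite^'d" and n :: nat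
    and C :: "('q list \<Rightarrow> complex) set" and T :: "complex^'d \<Rightarrow> 'q list \<Rightarrow> complex"
  assumes irreducible: "irreducible_rep G \<rho>"
    and C_subset: "C \<subseteq> tensor_space n"
    and intertwiner: "intertwining_iso n G \<rho> C T"
begin

lemma T_add: "T (u + v) = (\<lambda>x. T u x + T v x)"
  and T_scale: "T (c *s v) = (\<lambda>x. c * T v x)"
  and T_bij: "bij_betw T UNIV C"
  and T_intertwines: "g \<in> G \<Longrightarrow> apply_op n (tensor_pow n g) (T v) = T (\<rho> g *v v)"
  using intertwiner unfolding intertwining_iso_def by simp_all

lemma T_zero: "T 0 = (\<lambda>_. 0)"
  using T_scale[of 0 0] by simp

lemma T_sum: "finite K \<Longrightarrow> T (\<Sum>k\<in>K. f k) = (\<lambda>x. \<Sum>k\<in>K. T (f k) x)"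
  by (induction K rule: finite_induct) (auto simp: T_zero T_add)

lemma T_in_basis: "T a = (\<lambda>xs. \<Sum>i\<in>UNIV. a$i * T (axis i 1) xs)"
  by (subst (1) basis_expansion[symmetric, of a]) (simp add: T_sum T_scale)

definition gram :: "complex^'d^'d" where
  "gram = (\<chi> i j. inner_n n (T (axis i 1)) (T (axis j 1)))"

lemma inner_T_op:
  "inner_n n (T a) (apply_op n E (T b)) = sesq (\<chi> i j. inner_n n (T (axis i 1)) (apply_op n E (T (axis j 1)))) a b"
  by (subst (1 2) T_in_basis) (simp only: apply_op_lincomb inner_n_lincomb)

lemma inner_T: "inner_n n (T a) (T b) = sesq gram a b"
  unfolding gram_def by (subst (1 2) T_in_basis) (rule inner_n_lincomb)

sublocale unitary_rep G gram \<rho>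
proof unfold_locales
  fix a b :: "complex^'d"
  show "sesq gram b a = cnj (sesq gram a b)"
    unfolding inner_T[symmetric] by (rule inner_n_hermitian)
  show "Re (sesq gram a a) \<ge> 0"
    unfolding inner_T[symmetric] by (rule inner_n_self_nonneg)
  show "sesq gram a a = 0 \<Longrightarrow> a = 0"
  proof -
    assume "sesq gram a a = 0"
    then have "\<forall>xs\<in>tuples n. T a xs = 0"
      unfolding inner_T[symmetric] inner_n_def by (simp add: sum_cnj_mult_self_eq_0_iff)
    moreover have "T a \<in> tensor_space n"
      using T_bij C_subset unfolding bij_betw_def by blast
    ultimately have "T a xs = 0" for xs
      unfolding tensor_space_def by (cases "length xs = n") auto
    then have "T a = T 0"
      unfolding T_zero by (simp add: fun_eq_iff)
    then show "a = 0"
      using T_bij unfolding bij_betw_def inj_on_def by blast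
  qed
  show "representation G \<rho>"
    using irreducible unfolding irreducible_rep_def by simp
  fix g assume g: "g \<in> G"
  have "inner_n n (T (\<rho> g *v a)) (T (\<rho> g *v b)) = inner_n n (T a) (T b)"
    unfolding T_intertwines[OF g, symmetric]
    using subset_unitary g by (intro inner_tensor_pow unitary_groupD(2)) auto
  then show "sesq gram (\<rho> g *v a) (\<rho> g *v b) = sesq gram a b"
    unfolding inner_T .
qed

lemma knill_laflamme:
  assumes design: "twisted_unitary_t_group G \<rho> t" and weight: "weight_le n t E"
  shows "\<exists>c. \<forall>\<psi>\<in>C. \<forall>\<phi>\<in>C. inner_n n \<psi> (apply_op n E \<phi>) = c * inner_n n \<psi> \<phi>"
proof -
  define w where "w g = complex_of_real ((cmod (character \<rho> g))\<^sup>2)" for g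
  define K where "K = (\<chi> i j. inner_n n (T (axis i 1)) (apply_op n E (T (axis j 1))))"
  have K: "inner_n n (T a) (apply_op n E (T b)) = sesq K a b" for a b
    unfolding K_def by (rule inner_T_op)
  obtain \<mu> where "haar_measure \<mu>" and "\<forall>a b. length a = t \<longrightarrow> length b = t \<longrightarrow>
      (1 / of_nat (card G)) * (\<Sum>g\<in>G. w g * moment_entry t g a b) = integral\<^sup>L \<mu> (\<lambda>U. moment_entry t U a b)"
    using design unfolding twisted_unitary_t_group_def w_def by blast
  then interpret weighted_design \<mu> G w t
    using card_pos subset_unitary by unfold_locales auto
  have twirl: "(\<Sum>g\<in>G. w g * sesq K (\<rho> (g ** h) *v a) (\<rho> (g ** h) *v b)) =
      (\<Sum>g\<in>G. w g * sesq K (\<rho> g *v a) (\<rho> g *v b))" if h: "h \<in> G" for h a b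
  proof -
    have "(\<Sum>g\<in>G. w g * sesq K (\<rho> (g ** h) *v a) (\<rho> (g ** h) *v b)) = (\<Sum>g\<in>G. w g *
        inner_n n (apply_op n (tensor_pow n (g ** h)) (T a)) (apply_op n E (apply_op n (tensor_pow n (g ** h)) (T b))))"
      using h by (intro sum.cong refl) (simp add: T_intertwines mult_mem K)
    also have "\<dots> = (\<Sum>g\<in>G. w g *
        inner_n n (apply_op n (tensor_pow n g) (T a)) (apply_op n E (apply_op n (tensor_pow n g) (T b))))"
      using h subset_unitary by (intro weighted_twirl_right_invariant weight) auto
    also have "\<dots> = (\<Sum>g\<in>G. w g * sesq K (\<rho> g *v a) (\<rho> g *v b))"
      by (intro sum.cong refl) (simp add: T_intertwines K)
    finally show ?thesis .
  qed
  have invariant_K: "sesq K (\<rho> g *v a) (\<rho> g *v b) = sesq K a b" if "g \<in> G" for g a b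
    by (rule invariant_if_weighted_twirl_invariant[OF twirl[unfolded w_def] that])
  obtain c where c: "\<And>a b. sesq K a b = c * sesq gram a b"
    using invariant_sesq_multiple[OF irreducible invariant_K] by metis
  have "inner_n n \<psi> (apply_op n E \<phi>) = c * inner_n n \<psi> \<phi>" if in_C: "\<psi> \<in> C" "\<phi> \<in> C" for \<psi> \<phi>
  proof -
    obtain a b where "\<psi> = T a" "\<phi> = T b"
      using T_bij in_C unfolding bij_betw_def by blast
    then show ?thesis
      by (simp add: K inner_T c)
  qed
  then show ?thesis
    by blast
qed

end

theorem theorem1:
  fixes G :: "('q::finite) cmat set"
    and \<rho> :: "'q cmat \<Rightarrow> complex^'d::finite^'d"
    and t n :: nat
    and C :: "('q list \<Rightarrow> complex) set"
  assumes "finite_unitary_subgroup G"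
    and "irreducible_rep G \<rho>"
    and "twisted_unitary_t_group G \<rho> t"
    and "n \<ge> 1"
    and "transforms_in n G \<rho> C"
  shows "(\<forall>E. weight_le n t E \<longrightarrow>
            (\<exists>c. \<forall>\<psi>\<in>C. \<forall>\<phi>\<in>C. inner_n n \<psi> (apply_op n E \<phi>) = c * inner_n n \<psi> \<phi>))
       \<and> (\<forall>g\<in>G. \<forall>v\<in>C. apply_op n (tensor_pow n g) v \<in> C)
       \<and> (\<exists>T. intertwining_iso n G \<rho> C T)"
proof -
  obtain T where T: "intertwining_iso n G \<rho> C T" and "C \<subseteq> tensor_space n"
    and closed: "\<forall>g\<in>G. \<forall>v\<in>C. apply_op n (tensor_pow n g) v \<in> C"
    using \<open>transforms_in n G \<rho> C\<close> unfolding transforms_in_def by blast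
  then interpret code_space G \<rho> n C T
    using assms(1,2) by (intro code_space.intro finite_unitary_group.intro code_space_axioms.intro)
  have "\<forall>E. weight_le n t E \<longrightarrow>
      (\<exists>c. \<forall>\<psi>\<in>C. \<forall>\<phi>\<in>C. inner_n n \<psi> (apply_op n E \<phi>) = c * inner_n n \<psi> \<phi>)"
    using knill_laflamme[OF \<open>twisted_unitary_t_group G \<rho> t\<close>] by blast
  then show ?thesis
    using closed T by blast
qed

end
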